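(* Let the standing assumption (A) hold with $p\ge2$. Then every minimizer $(\bar\alpha_1,\bar\alpha_2)\in L^1(\Omega_1)\times L^1(\Omega_2)$ of problem (P$^\dagger$) satisfies $\bar\alpha_i\in L^q(\Omega_i)$ for $i=1,2$.
   Context: Standing assumption (A): $\Omega_1,\Omega_2\subset\mathbb{R}^n$ are compact, $\Omega:=\Omega_1\times\Omega_2$, $c:\Omega\to\mathbb{R}$ is continuous with $c\ge c^\dagger>-\infty$, $\gamma>0$, $p>1$ and $q$ is its conjugate exponent ($1/p+1/q=1$), and $\mu_i\in L^p(\Omega_i)$ satisfy $\mu_i\ge\delta>0$ a.e. and $\int_{\Omega_i}\mu_i\,dx=1$ for $i=1,2$. Problem (P$^\dagger$) is: minimize $\Lambda(\alpha_1,\alpha_2):=\frac1q\|(\alpha_1\oplus\alpha_2-c)_+\|_{L^q(\Omega)}^q-\gamma^{q-1}\int_{\Omega_1}\alpha_1\mu_1\,dx-\gamma^{q-1}\int_{\Omega_2}\alpha_2\mu_2\,dx$ over all $\alpha_i\in L^1(\Omega_i)$, $i=1,2$, with $(\alpha_1\oplus\alpha_2-c)_+/\gamma\in L^q(\Omega)$, where $(\alpha_1\oplus\alpha_2)(x_1,x_2):=\alpha_1(x_1)+\alpha_2(x_2)$ and $t_+=\max(t,0)$. *)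

theory Defs
  imports "HOL-Analysis.Analysis"
begin

text \<open>L^r(S) with respect to Lebesgue measure restricted to S (as a set of representatives).\<close>
definition Lp_on :: "real \<Rightarrow> 'a::euclidean_space set \<Rightarrow> ('a \<Rightarrow> real) set" where
  "Lp_on r S = {f. f \<in> borel_measurable (lebesgue_on S) \<and>
                   integrable (lebesgue_on S) (\<lambda>x. \<bar>f x\<bar> powr r)}"

definition osum :: "('a \<Rightarrow> real) \<Rightarrow> ('b \<Rightarrow> real) \<Rightarrow> ('a \<times> 'b \<Rightarrow> real)" where
  "osum a1 a2 = (\<lambda>(x1, x2). a1 x1 + a2 x2)"

definition Lambda ::
  "('a::euclidean_space \<times> 'a \<Rightarrow> real) \<Rightarrow> real \<Rightarrow> real \<Rightarrow> ('a \<Rightarrow> real) \<Rightarrow> ('a \<Rightarrow> real)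
   \<Rightarrow> 'a set \<Rightarrow> 'a set \<Rightarrow> ('a \<Rightarrow> real) \<Rightarrow> ('a \<Rightarrow> real) \<Rightarrow> real" where
  "Lambda c \<gamma> q \<mu>1 \<mu>2 \<Omega>1 \<Omega>2 a1 a2 =
     (1 / q) * (\<integral>z. (max (osum a1 a2 z - c z) 0) powr q \<partial>lebesgue_on (\<Omega>1 \<times> \<Omega>2))
     - \<gamma> powr (q - 1) * (\<integral>x. a1 x * \<mu>1 x \<partial>lebesgue_on \<Omega>1)
     - \<gamma> powr (q - 1) * (\<integral>x. a2 x * \<mu>2 x \<partial>lebesgue_on \<Omega>2)"

text \<open>Feasible pairs of (P-dagger): alpha_i in L^1(Omega_i), (alpha1 oplus alpha2 - c)_+/gamma in L^q(Omega),
  and the linear terms are finite (alpha_i mu_i integrable); pairs violating the last condition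
  have objective value +infinity in the extended-valued reading and can never be minimizers.\<close>
definition feasible ::
  "('a::euclidean_space \<times> 'a \<Rightarrow> real) \<Rightarrow> real \<Rightarrow> real \<Rightarrow> ('a \<Rightarrow> real) \<Rightarrow> ('a \<Rightarrow> real)
   \<Rightarrow> 'a set \<Rightarrow> 'a set \<Rightarrow> ('a \<Rightarrow> real) \<Rightarrow> ('a \<Rightarrow> real) \<Rightarrow> bool" where
  "feasible c \<gamma> q \<mu>1 \<mu>2 \<Omega>1 \<Omega>2 a1 a2 \<longleftrightarrow>
     integrable (lebesgue_on \<Omega>1) a1 \<and> integrable (lebesgue_on \<Omega>2) a2 \<and>
     (\<lambda>z. max (osum a1 a2 z - c z) 0 / \<gamma>) \<in> Lp_on q (\<Omega>1 \<times> \<Omega>2) \<and>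
     integrable (lebesgue_on \<Omega>1) (\<lambda>x. a1 x * \<mu>1 x) \<and>
     integrable (lebesgue_on \<Omega>2) (\<lambda>x. a2 x * \<mu>2 x)"

definition is_minimizer ::
  "('a::euclidean_space \<times> 'a \<Rightarrow> real) \<Rightarrow> real \<Rightarrow> real \<Rightarrow> ('a \<Rightarrow> real) \<Rightarrow> ('a \<Rightarrow> real)
   \<Rightarrow> 'a set \<Rightarrow> 'a set \<Rightarrow> ('a \<Rightarrow> real) \<Rightarrow> ('a \<Rightarrow> real) \<Rightarrow> bool" where
  "is_minimizer c \<gamma> q \<mu>1 \<mu>2 \<Omega>1 \<Omega>2 a1 a2 \<longleftrightarrow>
     feasible c \<gamma> q \<mu>1 \<mu>2 \<Omega>1 \<Omega>2 a1 a2 \<and>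
     (\<forall>b1 b2. feasible c \<gamma> q \<mu>1 \<mu>2 \<Omega>1 \<Omega>2 b1 b2 \<longrightarrow>
        Lambda c \<gamma> q \<mu>1 \<mu>2 \<Omega>1 \<Omega>2 a1 a2 \<le> Lambda c \<gamma> q \<mu>1 \<mu>2 \<Omega>1 \<Omega>2 b1 b2)"

end

theory Submission
  imports Defs
begin

text \<open>
  Write \<open>\<kappa> = \<gamma>\<^sup>q\<^sup>-\<^sup>1\<close> and pass to Borel representatives on the finite measures
  \<open>1\<^sub>\<Omega>\<^sub>i dx\<close>, so that (P\<open>\<dagger>\<close>) becomes a problem for a pair \<open>(g1, g2)\<close> on a product of finite measure
  spaces. Minimality against \<open>(g1 + 1\<^sub>E, g2)\<close> with \<open>E = {g1 < -L - 1}\<close> gives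
  \<open>\<kappa> \<delta> |E| \<le> |E| \<integral> (g2 - L - c0)\<^sub>+\<^sup>q\<^sup>-\<^sup>1\<close>, and the last integral tends to \<open>0\<close> as \<open>L \<rightarrow> \<infinity>\<close>
  (for \<open>q \<le> 2\<close> it is dominated by \<open>1 + |g2| + |c0|\<close>); so \<open>g1\<close> is bounded below.
  Minimality against \<open>(min g1 h, g2)\<close> gives
  \<open>\<integral> (g1 - h)\<^sub>+ \<integral> (h + g2 - c)\<^sub>+\<^sup>q\<^sup>-\<^sup>1 dy dx \<le> \<kappa> \<integral> (g1 - h)\<^sub>+ \<mu>1\<close>, while for
  \<open>h = K + (2 \<kappa> \<mu>1\<^sub>+ / |\<Omega>2|)\<^sup>p\<^sup>-\<^sup>1\<close> and large \<open>K\<close> the inner integral exceeds \<open>\<kappa> \<mu>1\<close> everywhere;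
  hence \<open>g1 \<le> h\<close>. As \<open>(p - 1) q = p\<close>, both bounds lie in \<open>L\<^sup>q\<close>. Exchanging the two marginals
  handles \<open>g2\<close>.
\<close>

section \<open>Elementary inequalities\<close>

lemma powr_diff_mean_value_bounds:
  fixes a b q :: real
  assumes q: "1 \<le> q" and ab: "0 \<le> a" "a \<le> b"
  shows "b powr q - a powr q \<le> q * b powr (q - 1) * (b - a)"
    and "q * a powr (q - 1) * (b - a) \<le> b powr q - a powr q"
proof -
  have "b powr q - a powr q \<le> q * b powr (q - 1) * (b - a) \<and>
        q * a powr (q - 1) * (b - a) \<le> b powr q - a powr q"
  proof (cases "a = 0 \<or> a = b")
    case True
    moreover have "b powr q = b powr (q - 1) * b" if "0 < b"
      using that by (simp add: powr_diff)
    ultimately show ?thesis using ab q by (cases "b = 0") (auto simp: mult.commute)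
  next
    case False
    with ab have a0: "0 < a" and lt: "a < b" by auto
    have "\<exists>z>a. z < b \<and> b powr q - a powr q = (b - a) * (q * z powr (q - 1))"
      by (rule MVT2[OF lt]) (use a0 in \<open>auto intro!: derivative_eq_intros\<close>)
    then obtain z where z: "a < z" "z < b" "b powr q - a powr q = (b - a) * (q * z powr (q - 1))"
      by blast
    have "z powr (q - 1) \<le> b powr (q - 1)" "a powr (q - 1) \<le> z powr (q - 1)"
      using z a0 q by (auto intro!: powr_mono2)
    moreover have "(b - a) * (q * z powr (q - 1)) \<le> (b - a) * (q * b powr (q - 1))"
      using z lt q calculation by (intro mult_left_mono) auto
    moreover have "(b - a) * (q * a powr (q - 1)) \<le> (b - a) * (q * z powr (q - 1))"
      using z lt q calculation by (intro mult_left_mono) auto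
    ultimately show ?thesis using z(3) by (simp add: algebra_simps)
  qed
  then show "b powr q - a powr q \<le> q * b powr (q - 1) * (b - a)"
    and "q * a powr (q - 1) * (b - a) \<le> b powr q - a powr q" by auto
qed

lemma pos_part_powr_diff_le:
  fixes u v q :: real
  assumes q: "1 \<le> q" and uv: "u \<le> v"
  shows "max v 0 powr q - max u 0 powr q \<le> q * max v 0 powr (q - 1) * (v - u)"
proof -
  have "max v 0 powr q - max u 0 powr q \<le> q * max v 0 powr (q - 1) * (max v 0 - max u 0)"
    using powr_diff_mean_value_bounds(1)[OF q, of "max u 0" "max v 0"] uv by auto
  also have "\<dots> \<le> q * max v 0 powr (q - 1) * (v - u)"
    using q uv by (intro mult_left_mono) auto
  finally show ?thesis .
qed

lemma pos_part_powr_diff_ge: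
  fixes u v q :: real
  assumes q: "1 \<le> q" and uv: "u \<le> v"
  shows "q * max u 0 powr (q - 1) * (v - u) \<le> max v 0 powr q - max u 0 powr q"
proof (cases "u \<le> 0")
  case True
  moreover have "max u 0 powr q \<le> max v 0 powr q" using uv q by (intro powr_mono2) auto
  ultimately show ?thesis using q by simp
next
  case False
  then show ?thesis using powr_diff_mean_value_bounds(2)[OF q, of u v] uv by auto
qed

lemma powr_le_1_plus_powr:
  fixes t e p :: real
  assumes "0 \<le> t" "0 \<le> e" "e \<le> p"
  shows "t powr e \<le> 1 + t powr p"
proof (cases "t \<le> 1")
  case True
  then have "t powr e \<le> 1" using assms by (cases "t = 0") (auto intro: powr_le1)
  then show ?thesis by (smt (verit) powr_ge_zero)
next
  case False
  then have "t powr e \<le> t powr p" using assms by (intro powr_mono) auto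
  then show ?thesis by simp
qed

lemma powr_add_le:
  fixes x y q :: real
  assumes "0 \<le> x" "0 \<le> y" "0 \<le> q"
  shows "(x + y) powr q \<le> 2 powr q * (x powr q + y powr q)"
proof -
  have "(x + y) powr q \<le> (2 * max x y) powr q" using assms by (intro powr_mono2) auto
  also have "\<dots> = 2 powr q * max x y powr q" using assms by (simp add: powr_mult)
  also have "max x y powr q \<le> x powr q + y powr q" by (simp add: max_def)
  then have "2 powr q * max x y powr q \<le> 2 powr q * (x powr q + y powr q)"
    by (intro mult_left_mono) auto
  finally show ?thesis .
qed

lemma (in finite_measure) integrable_of_integrable_abs_powr:
  fixes f :: "'a \<Rightarrow> real"
  assumes "1 \<le> p" and [measurable]: "f \<in> borel_measurable M"
    and "integrable M (\<lambda>x. \<bar>f x\<bar> powr p)"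
  shows "integrable M f"
proof (rule Bochner_Integration.integrable_bound)
  show "integrable M (\<lambda>x. 1 + \<bar>f x\<bar> powr p)" using assms by auto
  show "AE x in M. norm (f x) \<le> norm (1 + \<bar>f x\<bar> powr p)"
    using powr_le_1_plus_powr[of "\<bar>f _\<bar>" 1 p] assms by auto
qed simp

lemma (in finite_measure) measure_abs_less_ge_half:
  fixes f :: "'a \<Rightarrow> real"
  assumes f: "integrable M f" and pos: "0 < measure M (space M)"
  shows "\<exists>K>0. measure M (space M) / 2 \<le> measure M {x \<in> space M. \<bar>f x\<bar> < K}"
proof -
  define m I where "m = measure M (space M)" and "I = (\<integral>x. \<bar>f x\<bar> \<partial>M)"
  define K where "K = 2 * I / m + 1"
  have I: "0 \<le> I" unfolding I_def by simp
  have K0: "0 < K" unfolding K_def using I pos by (simp add: m_def add_nonneg_pos)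
  have "I < K * (m / 2)" unfolding K_def using pos by (simp add: m_def field_simps)
  then have IK: "I / K < m / 2" using K0 by (simp add: divide_less_eq mult.commute)
  have "measure M {x \<in> space M. K \<le> \<bar>f x\<bar>} \<le> I / K"
    unfolding I_def using f K0 by (intro integral_Markov_inequality_measure[where A="space M"]) auto
  moreover have "{x \<in> space M. \<bar>f x\<bar> < K} = space M - {x \<in> space M. K \<le> \<bar>f x\<bar>}" by auto
  then have "measure M {x \<in> space M. \<bar>f x\<bar> < K} = m - measure M {x \<in> space M. K \<le> \<bar>f x\<bar>}"
    using f unfolding m_def by (simp add: finite_measure_compl)
  ultimately show ?thesis using K0 IK unfolding m_def by (intro exI[of _ K] conjI) linarith+
qed

lemma (in pair_sigma_finite)
  fixes w :: "'b \<Rightarrow> real"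
  assumes A: "A \<in> sets M1" "emeasure M1 A < \<infinity>" and w: "integrable M2 w"
  shows integrable_indicator_fst_times_snd:
      "integrable (M1 \<Otimes>\<^sub>M M2) (\<lambda>z. indicator A (fst z) * w (snd z))"
    and integral_indicator_fst_times_snd: "(\<integral>z. indicator A (fst z) * w (snd z) \<partial>(M1 \<Otimes>\<^sub>M M2)) = measure M1 A * (\<integral>y. w y \<partial>M2)"
proof -
  have [measurable]: "w \<in> borel_measurable M2" using w by auto
  have IA: "integrable M1 (\<lambda>x. indicator A x * c)" for c :: real
    using A by (intro integrable_mult_left integrable_real_indicator)
  show int: "integrable (M1 \<Otimes>\<^sub>M M2) (\<lambda>z. indicator A (fst z) * w (snd z))"
  proof (rule Fubini_integrable)
    show "integrable M1 (\<lambda>x. \<integral>y. norm (indicator A (fst (x, y)) * w (snd (x, y))) \<partial>M2)"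
      using IA[of "\<integral>y. \<bar>w y\<bar> \<partial>M2"] by (simp add: abs_mult)
    show "AE x in M1. integrable M2 (\<lambda>y. indicator A (fst (x, y)) * w (snd (x, y)))"
      using w by simp
  qed (use A in measurable)
  have "(\<integral>z. indicator A (fst z) * w (snd z) \<partial>(M1 \<Otimes>\<^sub>M M2))
      = (\<integral>x. indicator A x * (\<integral>y. w y \<partial>M2) \<partial>M1)"
    using integral_fst'[OF int] by simp
  also have "\<dots> = measure M1 A * (\<integral>y. w y \<partial>M2)"
    using A by (simp add: measure_def)
  finally show "(\<integral>z. indicator A (fst z) * w (snd z) \<partial>(M1 \<Otimes>\<^sub>M M2)) = measure M1 A * (\<integral>y. w y \<partial>M2)" .
qed

lemma AE_not_of_nn_integral_le:
  assumes [measurable]: "f \<in> borel_measurable M" "g \<in> borel_measurable M"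
    and le: "(\<integral>\<^sup>+x. g x \<partial>M) \<le> (\<integral>\<^sup>+x. f x \<partial>M)" and fin: "(\<integral>\<^sup>+x. f x \<partial>M) \<noteq> \<infinity>"
    and fg: "\<And>x. x \<in> space M \<Longrightarrow> f x \<le> g x"
    and strict: "\<And>x. x \<in> space M \<Longrightarrow> P x \<Longrightarrow> f x < g x"
  shows "AE x in M. \<not> P x"
proof -
  have "AE x in M. g x \<le> f x"
  proof (rule ccontr)
    assume "\<not> (AE x in M. g x \<le> f x)"
    then have "(\<integral>\<^sup>+x. f x \<partial>M) < (\<integral>\<^sup>+x. g x \<partial>M)"
      using fg fin by (intro nn_integral_less) (auto intro: AE_I2)
    with le show False by simp
  qed
  with AE_space show ?thesis
  proof eventually_elim
    case (elim x)
    then show ?case using strict[of x] leD by blast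
  qed
qed

section \<open>The dual problem on a product of finite measure spaces\<close>

definition dual_admissible ::
  "'a measure \<Rightarrow> 'b measure \<Rightarrow> ('a \<times> 'b \<Rightarrow> real) \<Rightarrow> real \<Rightarrow> ('a \<Rightarrow> real) \<Rightarrow> ('b \<Rightarrow> real)
   \<Rightarrow> ('a \<Rightarrow> real) \<Rightarrow> ('b \<Rightarrow> real) \<Rightarrow> bool" where
  "dual_admissible M1 M2 c q \<mu>1 \<mu>2 b1 b2 \<longleftrightarrow>
     integrable M1 b1 \<and> integrable M2 b2 \<and>
     integrable M1 (\<lambda>x. b1 x * \<mu>1 x) \<and> integrable M2 (\<lambda>y. b2 y * \<mu>2 y) \<and>
     integrable (M1 \<Otimes>\<^sub>M M2) (\<lambda>z. max (b1 (fst z) + b2 (snd z) - c z) 0 powr q)"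

definition dual_objective ::
  "'a measure \<Rightarrow> 'b measure \<Rightarrow> ('a \<times> 'b \<Rightarrow> real) \<Rightarrow> real \<Rightarrow> real \<Rightarrow> ('a \<Rightarrow> real) \<Rightarrow> ('b \<Rightarrow> real)
   \<Rightarrow> ('a \<Rightarrow> real) \<Rightarrow> ('b \<Rightarrow> real) \<Rightarrow> real" where
  "dual_objective M1 M2 c q \<kappa> \<mu>1 \<mu>2 b1 b2 =
     (1 / q) * (\<integral>z. max (b1 (fst z) + b2 (snd z) - c z) 0 powr q \<partial>(M1 \<Otimes>\<^sub>M M2))
     - \<kappa> * (\<integral>x. b1 x * \<mu>1 x \<partial>M1) - \<kappa> * (\<integral>y. b2 y * \<mu>2 y \<partial>M2)"

lemma (in pair_sigma_finite) dual_admissible_swap: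
  "dual_admissible M2 M1 (\<lambda>z. c (snd z, fst z)) q \<mu>2 \<mu>1 b2 b1 \<longleftrightarrow> dual_admissible M1 M2 c q \<mu>1 \<mu>2 b1 b2"
proof -
  define F where "F = (\<lambda>z. max (b1 (fst z) + b2 (snd z) - c z) 0 powr q)"
  have "(\<lambda>z. max (b2 (fst z) + b1 (snd z) - c (snd z, fst z)) 0 powr q) = (\<lambda>(x, y). F (y, x))"
    by (auto simp: fun_eq_iff F_def add.commute)
  then have "integrable (M2 \<Otimes>\<^sub>M M1) (\<lambda>z. max (b2 (fst z) + b1 (snd z) - c (snd z, fst z)) 0 powr q)
      \<longleftrightarrow> integrable (M1 \<Otimes>\<^sub>M M2) F"
    using integrable_product_swap_iff[of F] by simp
  then show ?thesis unfolding dual_admissible_def F_def by auto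
qed

lemma (in pair_sigma_finite) dual_objective_swap:
  assumes [measurable]: "c \<in> borel_measurable (M1 \<Otimes>\<^sub>M M2)"
    "b1 \<in> borel_measurable M1" "b2 \<in> borel_measurable M2"
  shows "dual_objective M2 M1 (\<lambda>z. c (snd z, fst z)) q \<kappa> \<mu>2 \<mu>1 b2 b1 = dual_objective M1 M2 c q \<kappa> \<mu>1 \<mu>2 b1 b2"
proof -
  define F where "F = (\<lambda>z. max (b1 (fst z) + b2 (snd z) - c z) 0 powr q)"
  have "F \<in> borel_measurable (M1 \<Otimes>\<^sub>M M2)" unfolding F_def by measurable
  moreover have "(\<lambda>z. max (b2 (fst z) + b1 (snd z) - c (snd z, fst z)) 0 powr q) = (\<lambda>(x, y). F (y, x))"
    by (auto simp: fun_eq_iff F_def add.commute)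
  ultimately have "(\<integral>z. max (b2 (fst z) + b1 (snd z) - c (snd z, fst z)) 0 powr q \<partial>(M2 \<Otimes>\<^sub>M M1))
      = integral\<^sup>L (M1 \<Otimes>\<^sub>M M2) F"
    using integral_product_swap[of F] by simp
  then show ?thesis unfolding dual_objective_def F_def by simp
qed

locale dual_minimizer =
  fixes M1 :: "'a measure" and M2 :: "'b measure" and c :: "'a \<times> 'b \<Rightarrow> real"
    and \<mu>1 :: "'a \<Rightarrow> real" and \<mu>2 :: "'b \<Rightarrow> real" and g1 :: "'a \<Rightarrow> real" and g2 :: "'b \<Rightarrow> real"
    and p q \<kappa> \<delta> c0 C :: real
  assumes finite1: "finite_measure M1" and finite2: "finite_measure M2"
    and nontrivial1: "0 < measure M1 (space M1)" and nontrivial2: "0 < measure M2 (space M2)"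
    and p_gt_1: "1 < p" and conjugate: "1 / p + 1 / q = 1" and p_ge_2: "2 \<le> p"
    and \<kappa>_pos: "0 < \<kappa>" and \<delta>_pos: "0 < \<delta>"
    and c_measurable[measurable]: "c \<in> borel_measurable (M1 \<Otimes>\<^sub>M M2)"
    and c_bounds: "\<And>z. z \<in> space (M1 \<Otimes>\<^sub>M M2) \<Longrightarrow> c0 \<le> c z \<and> c z \<le> C"
    and \<mu>1_measurable[measurable]: "\<mu>1 \<in> borel_measurable M1"
    and \<mu>2_measurable[measurable]: "\<mu>2 \<in> borel_measurable M2"
    and \<mu>1_ge_\<delta>: "AE x in M1. \<delta> \<le> \<mu>1 x" and \<mu>2_ge_\<delta>: "AE y in M2. \<delta> \<le> \<mu>2 y"
    and \<mu>1_Lp: "integrable M1 (\<lambda>x. \<bar>\<mu>1 x\<bar> powr p)" and \<mu>2_Lp: "integrable M2 (\<lambda>y. \<bar>\<mu>2 y\<bar> powr p)"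
    and admissible: "dual_admissible M1 M2 c q \<mu>1 \<mu>2 g1 g2"
    and minimal: "\<And>b1 b2. dual_admissible M1 M2 c q \<mu>1 \<mu>2 b1 b2 \<Longrightarrow>
       dual_objective M1 M2 c q \<kappa> \<mu>1 \<mu>2 g1 g2 \<le> dual_objective M1 M2 c q \<kappa> \<mu>1 \<mu>2 b1 b2"
begin

sublocale M1: finite_measure M1 by (fact finite1)
sublocale M2: finite_measure M2 by (fact finite2)
sublocale P: pair_sigma_finite M1 M2 ..
sublocale M12: finite_measure "M1 \<Otimes>\<^sub>M M2"
  by (rule finite_measure_pair_measure[OF finite2 finite1])

lemma q_gt_1: "1 < q" and q_le_2: "q \<le> 2"
proof -
  have iq: "1 / q = 1 - 1 / p" using conjugate by simp
  have "0 < 1 / q" unfolding iq using p_gt_1 by simp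
  then have q0: "0 < q" by simp
  have "1 / q < 1" unfolding iq using p_gt_1 by simp
  then show "1 < q" using q0 by (simp add: divide_less_eq)
  have "1 / 2 \<le> 1 / q" unfolding iq using p_ge_2 by (simp add: divide_le_eq)
  then show "q \<le> 2" using q0 by (simp add: divide_le_eq le_divide_eq)
qed

lemma conjugate_exponents: "(p - 1) * (q - 1) = 1" "(p - 1) * q = p"
proof -
  have "p + q = p * q" using conjugate p_gt_1 q_gt_1 by (simp add: field_simps)
  then show "(p - 1) * (q - 1) = 1" "(p - 1) * q = p" by (simp_all add: algebra_simps)
qed

lemma g1_integrable: "integrable M1 g1"
  and g2_integrable: "integrable M2 g2"
  and g1_\<mu>1_integrable: "integrable M1 (\<lambda>x. g1 x * \<mu>1 x)"
  and excess_integrable: "integrable (M1 \<Otimes>\<^sub>M M2) (\<lambda>z. max (g1 (fst z) + g2 (snd z) - c z) 0 powr q)"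
  using admissible by (simp_all add: dual_admissible_def)

lemma g1_measurable[measurable]: "g1 \<in> borel_measurable M1"
  and g2_measurable[measurable]: "g2 \<in> borel_measurable M2"
  using g1_integrable g2_integrable by auto

lemma \<mu>1_integrable: "integrable M1 \<mu>1"
  by (rule M1.integrable_of_integrable_abs_powr[OF _ _ \<mu>1_Lp]) (use p_gt_1 in auto)

abbreviation excess :: "('a \<Rightarrow> real) \<Rightarrow> ('b \<Rightarrow> real) \<Rightarrow> 'a \<times> 'b \<Rightarrow> real" where
  "excess b1 b2 z \<equiv> max (b1 (fst z) + b2 (snd z) - c z) 0 powr q"

lemma first_variation:
  assumes adm: "dual_admissible M1 M2 c q \<mu>1 \<mu>2 b g2"
  shows "q * \<kappa> * (\<integral>x. (b x - g1 x) * \<mu>1 x \<partial>M1) \<le> (\<integral>z. excess b g2 z - excess g1 g2 z \<partial>(M1 \<Otimes>\<^sub>M M2))"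
proof -
  have b: "integrable M1 (\<lambda>x. b x * \<mu>1 x)" "integrable (M1 \<Otimes>\<^sub>M M2) (excess b g2)"
    using adm by (simp_all add: dual_admissible_def)
  define X Y where "X = (\<integral>x. b x * \<mu>1 x \<partial>M1) - (\<integral>x. g1 x * \<mu>1 x \<partial>M1)"
    and "Y = (\<integral>z. excess b g2 z \<partial>(M1 \<Otimes>\<^sub>M M2)) - (\<integral>z. excess g1 g2 z \<partial>(M1 \<Otimes>\<^sub>M M2))"
  have "Y / q = (1 / q) * (\<integral>z. excess b g2 z \<partial>(M1 \<Otimes>\<^sub>M M2)) - (1 / q) * (\<integral>z. excess g1 g2 z \<partial>(M1 \<Otimes>\<^sub>M M2))"
    unfolding Y_def by (simp add: diff_divide_distrib)
  moreover have "\<kappa> * X = \<kappa> * (\<integral>x. b x * \<mu>1 x \<partial>M1) - \<kappa> * (\<integral>x. g1 x * \<mu>1 x \<partial>M1)"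
    unfolding X_def by (simp add: right_diff_distrib)
  ultimately have "\<kappa> * X \<le> Y / q"
    using minimal[OF adm] unfolding dual_objective_def by linarith
  then have "\<kappa> * X * q \<le> Y" using q_gt_1 by (simp add: pos_le_divide_eq)
  moreover have "(\<integral>x. (b x - g1 x) * \<mu>1 x \<partial>M1) = X"
    unfolding X_def using b g1_\<mu>1_integrable by (simp add: left_diff_distrib)
  moreover have "(\<integral>z. excess b g2 z - excess g1 g2 z \<partial>(M1 \<Otimes>\<^sub>M M2)) = Y"
    unfolding Y_def using b excess_integrable by simp
  ultimately show ?thesis by (simp add: ac_simps)
qed


definition tail_weight :: "real \<Rightarrow> 'b \<Rightarrow> real" where
  "tail_weight L y = max (g2 y - L - c0) 0 powr (q - 1)"

lemma tail_weight_measurable[measurable]: "tail_weight L \<in> borel_measurable M2"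
  unfolding tail_weight_def by measurable

text \<open>This domination by the integrable function \<open>g2\<close> is where \<open>q \<le> 2\<close>, i.e. \<open>p \<ge> 2\<close>, is used.\<close>
lemma tail_weight_le: "0 \<le> L \<Longrightarrow> tail_weight L y \<le> 1 + (\<bar>g2 y\<bar> + \<bar>c0\<bar>)"
proof -
  assume "0 \<le> L"
  moreover have "tail_weight L y \<le> 1 + max (g2 y - L - c0) 0 powr 1"
    unfolding tail_weight_def using q_gt_1 q_le_2 by (intro powr_le_1_plus_powr) auto
  ultimately show ?thesis by auto
qed

lemma tail_weight_integrable: "0 \<le> L \<Longrightarrow> integrable M2 (tail_weight L)"
  by (rule Bochner_Integration.integrable_bound[where f="\<lambda>y. 1 + (\<bar>g2 y\<bar> + \<bar>c0\<bar>)"])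
     (use g2_integrable tail_weight_le in \<open>auto simp: tail_weight_def\<close>)

lemma tail_weight_small: "\<exists>L\<ge>0. (\<integral>y. tail_weight L y \<partial>M2) < \<kappa> * \<delta>"
proof -
  have "(\<lambda>n. \<integral>y. tail_weight (real n) y \<partial>M2) \<longlonglongrightarrow> (\<integral>y. 0 \<partial>M2)"
  proof (rule integral_dominated_convergence[where w="\<lambda>y. 1 + (\<bar>g2 y\<bar> + \<bar>c0\<bar>)"])
    show "integrable M2 (\<lambda>y. 1 + (\<bar>g2 y\<bar> + \<bar>c0\<bar>))" using g2_integrable by auto
    show "AE y in M2. (\<lambda>n. tail_weight (real n) y) \<longlonglongrightarrow> 0"
    proof (rule AE_I2, rule tendsto_eventually)
      fix y
      obtain N :: nat where "g2 y - c0 < real N" using reals_Archimedean2 by blast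
      then show "\<forall>\<^sub>F n in sequentially. tail_weight (real n) y = 0"
        unfolding eventually_sequentially tail_weight_def by (intro exI[of _ N]) auto
    qed
    show "AE y in M2. norm (tail_weight (real n) y) \<le> 1 + (\<bar>g2 y\<bar> + \<bar>c0\<bar>)" for n
      using tail_weight_le by (auto simp: tail_weight_def)
  qed auto
  then have "\<forall>\<^sub>F n in sequentially. (\<integral>y. tail_weight (real n) y \<partial>M2) < \<kappa> * \<delta>"
    using \<kappa>_pos \<delta>_pos by (intro order_tendstoD) auto
  then obtain n where "(\<integral>y. tail_weight (real n) y \<partial>M2) < \<kappa> * \<delta>"
    by (auto simp: eventually_sequentially)
  then show ?thesis by (intro exI[of _ "real n"]) auto
qed

lemma excess_increment_le_tail_weight:
  fixes L :: real
  assumes z: "z \<in> space (M1 \<Otimes>\<^sub>M M2)"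
  defines "E \<equiv> {x \<in> space M1. g1 x < - L - 1}"
  shows "excess (\<lambda>x. g1 x + indicator E x) g2 z - excess g1 g2 z
    \<le> q * (indicator E (fst z) * tail_weight L (snd z))"
proof (cases "fst z \<in> E")
  case True
  define u v where "u = g1 (fst z) + g2 (snd z) - c z" and "v = u + 1"
  have "max v 0 powr q - max u 0 powr q \<le> q * max v 0 powr (q - 1) * (v - u)"
    using q_gt_1 by (intro pos_part_powr_diff_le) (auto simp: v_def)
  also have "max v 0 powr (q - 1) \<le> tail_weight L (snd z)"
    unfolding tail_weight_def
  proof (intro powr_mono2)
    show "max v 0 \<le> max (g2 (snd z) - L - c0) 0"
      using True c_bounds[OF z] by (auto simp: E_def u_def v_def)
  qed (use q_gt_1 in auto)
  then have "q * max v 0 powr (q - 1) * (v - u) \<le> q * tail_weight L (snd z)"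
    using q_gt_1 by (simp add: v_def)
  finally show ?thesis using True by (simp add: u_def v_def algebra_simps)
qed simp

lemma integrable_indicator_mult_\<mu>1: "E \<in> sets M1 \<Longrightarrow> integrable M1 (\<lambda>x. indicator E x * \<mu>1 x)"
  using integrable_mult_indicator[OF _ \<mu>1_integrable] by simp

lemma \<delta>_measure_le_integral_indicator:
  assumes E: "E \<in> sets M1"
  shows "\<delta> * measure M1 E \<le> (\<integral>x. indicator E x * \<mu>1 x \<partial>M1)"
proof -
  have "(\<integral>x. \<delta> * indicator E x \<partial>M1) \<le> (\<integral>x. indicator E x * \<mu>1 x \<partial>M1)"
  proof (intro integral_mono_AE)
    show "integrable M1 (\<lambda>x. \<delta> * indicator E x)"
      using E by (intro integrable_mult_right integrable_real_indicator) (auto simp: M1.emeasure_eq_measure)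
    show "AE x in M1. \<delta> * indicator E x \<le> indicator E x * \<mu>1 x"
      using \<mu>1_ge_\<delta> by eventually_elim (auto simp: indicator_def)
  qed (rule integrable_indicator_mult_\<mu>1[OF E])
  then show ?thesis using E by (simp add: sets.Int_space_eq2)
qed

lemma dual_admissible_add_indicator:
  assumes E[measurable]: "E \<in> sets M1"
  shows "dual_admissible M1 M2 c q \<mu>1 \<mu>2 (\<lambda>x. g1 x + indicator E x) g2"
  unfolding dual_admissible_def
proof (intro conjI)
  show "integrable M1 (\<lambda>x. g1 x + indicator E x)" using g1_integrable E
    by (intro Bochner_Integration.integrable_add integrable_real_indicator) (auto simp: M1.emeasure_eq_measure)
  show "integrable M1 (\<lambda>x. (g1 x + indicator E x) * \<mu>1 x)"
    unfolding distrib_right using g1_\<mu>1_integrable integrable_indicator_mult_\<mu>1[OF E] by auto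
  show "integrable (M1 \<Otimes>\<^sub>M M2) (excess (\<lambda>x. g1 x + indicator E x) g2)"
  proof (rule Bochner_Integration.integrable_bound)
    show "integrable (M1 \<Otimes>\<^sub>M M2) (\<lambda>z. 2 powr q * (excess g1 g2 z + 1))"
      using excess_integrable by auto
    have "excess (\<lambda>x. g1 x + indicator E x) g2 z \<le> 2 powr q * (excess g1 g2 z + 1)" for z
    proof -
      have "excess (\<lambda>x. g1 x + indicator E x) g2 z \<le> (max (g1 (fst z) + g2 (snd z) - c z) 0 + 1) powr q"
        using q_gt_1 by (intro powr_mono2) (auto simp: indicator_def)
      also have "\<dots> \<le> 2 powr q * (excess g1 g2 z + 1 powr q)"
        using q_gt_1 by (intro powr_add_le) auto
      finally show ?thesis by simp
    qed
    then show "AE z in M1 \<Otimes>\<^sub>M M2.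
        norm (excess (\<lambda>x. g1 x + indicator E x) g2 z) \<le> norm (2 powr q * (excess g1 g2 z + 1))"
      by (intro AE_I2) simp
  qed measurable
qed (use g2_integrable admissible in \<open>simp_all add: dual_admissible_def\<close>)

lemma lower_bound: "\<exists>L. AE x in M1. - L \<le> g1 x"
proof -
  obtain L where L: "0 \<le> L" "(\<integral>y. tail_weight L y \<partial>M2) < \<kappa> * \<delta>"
    using tail_weight_small by blast
  define E where "E = {x \<in> space M1. g1 x < - L - 1}"
  have E[measurable]: "E \<in> sets M1" unfolding E_def by measurable
  note adm = dual_admissible_add_indicator[OF E]
  have bound_integrable: "integrable (M1 \<Otimes>\<^sub>M M2) (\<lambda>z. indicator E (fst z) * tail_weight L (snd z))"
    and bound_integral: "(\<integral>z. indicator E (fst z) * tail_weight L (snd z) \<partial>(M1 \<Otimes>\<^sub>M M2))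
      = measure M1 E * (\<integral>y. tail_weight L y \<partial>M2)"
    using P.integrable_indicator_fst_times_snd[OF E _ tail_weight_integrable[OF L(1)]]
      P.integral_indicator_fst_times_snd[OF E _ tail_weight_integrable[OF L(1)]]
    by (simp_all add: M1.emeasure_eq_measure)
  have "q * \<kappa> * (\<integral>x. indicator E x * \<mu>1 x \<partial>M1)
      \<le> (\<integral>z. excess (\<lambda>x. g1 x + indicator E x) g2 z - excess g1 g2 z \<partial>(M1 \<Otimes>\<^sub>M M2))"
    using first_variation[OF adm] by simp
  also have "\<dots> \<le> (\<integral>z. q * (indicator E (fst z) * tail_weight L (snd z)) \<partial>(M1 \<Otimes>\<^sub>M M2))"
    using adm excess_integrable bound_integrable
    by (intro integral_mono) (auto simp: dual_admissible_def E_def intro: excess_increment_le_tail_weight)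
  also have "\<dots> = q * (measure M1 E * (\<integral>y. tail_weight L y \<partial>M2))"
    using bound_integral by simp
  finally have E_\<mu>1_le: "\<kappa> * (\<integral>x. indicator E x * \<mu>1 x \<partial>M1) \<le> measure M1 E * (\<integral>y. tail_weight L y \<partial>M2)"
    using q_gt_1 by (simp add: mult.assoc)
  have "\<kappa> * (\<delta> * measure M1 E) \<le> \<kappa> * (\<integral>x. indicator E x * \<mu>1 x \<partial>M1)"
    using \<delta>_measure_le_integral_indicator[OF E] \<kappa>_pos by (intro mult_left_mono) auto
  with E_\<mu>1_le have measure_E_le: "\<kappa> * \<delta> * measure M1 E \<le> (\<integral>y. tail_weight L y \<partial>M2) * measure M1 E"
    by (simp add: ac_simps)
  have "measure M1 E = 0"
  proof (rule ccontr)
    assume "measure M1 E \<noteq> 0"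
    then have "0 < measure M1 E" using measure_nonneg[of M1 E] by linarith
    then show False using measure_E_le L(2) by (simp add: mult_le_cancel_right)
  qed
  then have "AE x in M1. x \<notin> E"
    using E by (intro AE_not_in) (simp add: M1.emeasure_eq_measure null_sets_def)
  then have "AE x in M1. - (L + 1) \<le> g1 x"
    by (rule AE_mp) (auto intro!: AE_I2 simp: E_def)
  then show ?thesis by blast
qed


definition majorant :: "'a \<Rightarrow> real" where
  "majorant x = (2 * \<kappa> / measure M2 (space M2) * max (\<mu>1 x) 0) powr (p - 1)"

lemma majorant_measurable[measurable]: "majorant \<in> borel_measurable M1"
  unfolding majorant_def by measurable

lemma majorant_nonneg: "0 \<le> majorant x"
  unfolding majorant_def by simp

lemma majorant_powr_q_minus_1: "majorant x powr (q - 1) = 2 * \<kappa> / measure M2 (space M2) * max (\<mu>1 x) 0"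
proof -
  have "majorant x powr (q - 1) = (2 * \<kappa> / measure M2 (space M2) * max (\<mu>1 x) 0) powr 1"
    unfolding majorant_def powr_powr conjugate_exponents(1) ..
  also have "\<dots> = 2 * \<kappa> / measure M2 (space M2) * max (\<mu>1 x) 0"
    using \<kappa>_pos nontrivial2 by (intro powr_one) auto
  finally show ?thesis .
qed

lemma majorant_powr_q_le: "majorant x powr q \<le> (2 * \<kappa> / measure M2 (space M2)) powr p * \<bar>\<mu>1 x\<bar> powr p"
proof -
  define A where "A = 2 * \<kappa> / measure M2 (space M2)"
  have A: "0 \<le> A" unfolding A_def using \<kappa>_pos nontrivial2 by simp
  have "majorant x powr q = (A * max (\<mu>1 x) 0) powr p"
    unfolding majorant_def A_def[symmetric] powr_powr conjugate_exponents(2) ..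
  also have "\<dots> = A powr p * max (\<mu>1 x) 0 powr p" using A by (simp add: powr_mult)
  also have "\<dots> \<le> A powr p * \<bar>\<mu>1 x\<bar> powr p"
    using p_gt_1 by (intro mult_left_mono powr_mono2) auto
  finally show ?thesis unfolding A_def .
qed

lemma integrable_majorant_powr_q: "integrable M1 (\<lambda>x. majorant x powr q)"
proof (rule Bochner_Integration.integrable_bound)
  show "integrable M1 (\<lambda>x. (2 * \<kappa> / measure M2 (space M2)) powr p * \<bar>\<mu>1 x\<bar> powr p)"
    using \<mu>1_Lp by auto
  show "AE x in M1. norm (majorant x powr q) \<le> norm ((2 * \<kappa> / measure M2 (space M2)) powr p * \<bar>\<mu>1 x\<bar> powr p)"
    using majorant_powr_q_le by (intro AE_I2) simp
qed simp

lemma integrable_majorant: "integrable M1 majorant"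
proof (rule M1.integrable_of_integrable_abs_powr[of q])
  show "integrable M1 (\<lambda>x. \<bar>majorant x\<bar> powr q)"
    using integrable_majorant_powr_q majorant_nonneg by simp
qed (use q_gt_1 in auto)

lemma integrable_majorant_mult_\<mu>1: "integrable M1 (\<lambda>x. majorant x * \<mu>1 x)"
proof (rule Bochner_Integration.integrable_bound)
  define A where "A = 2 * \<kappa> / measure M2 (space M2)"
  have A: "0 \<le> A" unfolding A_def using \<kappa>_pos nontrivial2 by simp
  show "integrable M1 (\<lambda>x. A powr (p - 1) * \<bar>\<mu>1 x\<bar> powr p)" using \<mu>1_Lp by auto
  have "norm (majorant x * \<mu>1 x) \<le> norm (A powr (p - 1) * \<bar>\<mu>1 x\<bar> powr p)" for x
  proof (cases "0 < \<mu>1 x")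
    case True
    have "majorant x * \<mu>1 x = A powr (p - 1) * (\<mu>1 x powr (p - 1) * \<mu>1 x powr 1)"
      unfolding majorant_def A_def[symmetric] using True A by (simp add: powr_mult)
    also have "\<mu>1 x powr (p - 1) * \<mu>1 x powr 1 = \<mu>1 x powr p"
      by (subst powr_add[symmetric]) simp
    finally show ?thesis using True A by simp
  qed (simp add: majorant_def)
  then show "AE x in M1. norm (majorant x * \<mu>1 x) \<le> norm (A powr (p - 1) * \<bar>\<mu>1 x\<bar> powr p)"
    by (intro AE_I2)
qed simp

lemma slice_excess_gt:
  "\<exists>K. \<forall>x\<in>space M1. ennreal (\<kappa> * \<mu>1 x) < (\<integral>\<^sup>+y. max (K + majorant x + g2 y - c (x, y)) 0 powr (q - 1) \<partial>M2)"
proof -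
  define m where "m = measure M2 (space M2)"
  obtain K where K: "0 < K" "m / 2 \<le> measure M2 {y \<in> space M2. \<bar>g2 y\<bar> < K}"
    using M2.measure_abs_less_ge_half[OF g2_integrable nontrivial2] unfolding m_def by blast
  define E where "E = {y \<in> space M2. \<bar>g2 y\<bar> < K}"
  have E[measurable]: "E \<in> sets M2" unfolding E_def by measurable
  have "ennreal (\<kappa> * \<mu>1 x) < (\<integral>\<^sup>+y. max (K + \<bar>C\<bar> + 1 + majorant x + g2 y - c (x, y)) 0 powr (q - 1) \<partial>M2)"
    if x: "x \<in> space M1" for x
  proof -
    have "m / 2 * majorant x powr (q - 1) = \<kappa> * max (\<mu>1 x) 0"
      using nontrivial2 unfolding majorant_powr_q_minus_1 m_def by (simp add: field_simps)
    then have "\<kappa> * \<mu>1 x \<le> m / 2 * majorant x powr (q - 1)"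
      using \<kappa>_pos by (simp add: mult_left_mono)
    also have "\<dots> < m / 2 * (1 + majorant x) powr (q - 1)"
      using nontrivial2 q_gt_1 majorant_nonneg[of x]
      by (intro mult_strict_left_mono powr_less_mono2) (auto simp: m_def)
    also have "\<dots> \<le> (1 + majorant x) powr (q - 1) * measure M2 E"
      using K(2) by (subst mult.commute) (intro mult_left_mono, auto simp: E_def)
    finally have "\<kappa> * \<mu>1 x < (1 + majorant x) powr (q - 1) * measure M2 E" .
    moreover have "0 < (1 + majorant x) powr (q - 1) * measure M2 E"
      using K(2) nontrivial2 majorant_nonneg[of x] by (intro mult_pos_pos) (auto simp: E_def m_def)
    ultimately have "ennreal (\<kappa> * \<mu>1 x) < ennreal ((1 + majorant x) powr (q - 1)) * emeasure M2 E"
      using majorant_nonneg[of x]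
      by (subst M2.emeasure_eq_measure, subst ennreal_mult[symmetric]) (auto intro: ennreal_lessI)
    also have "\<dots> = (\<integral>\<^sup>+y. ennreal ((1 + majorant x) powr (q - 1)) * indicator E y \<partial>M2)"
      by (simp add: nn_integral_cmult_indicator)
    also have "\<dots> \<le> (\<integral>\<^sup>+y. max (K + \<bar>C\<bar> + 1 + majorant x + g2 y - c (x, y)) 0 powr (q - 1) \<partial>M2)"
    proof (intro nn_integral_mono)
      fix y assume y: "y \<in> space M2"
      show "ennreal ((1 + majorant x) powr (q - 1)) * indicator E y
          \<le> ennreal (max (K + \<bar>C\<bar> + 1 + majorant x + g2 y - c (x, y)) 0 powr (q - 1))"
      proof (cases "y \<in> E")
        case True
        have "c (x, y) \<le> C" using c_bounds[of "(x, y)"] x y by (simp add: space_pair_measure)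
        then have "1 + majorant x \<le> max (K + \<bar>C\<bar> + 1 + majorant x + g2 y - c (x, y)) 0"
          using True by (auto simp: E_def)
        then show ?thesis
          using True q_gt_1 majorant_nonneg[of x] by (auto intro!: ennreal_leI powr_mono2)
      qed simp
    qed
    finally show ?thesis .
  qed
  then show ?thesis by (intro exI[of _ "K + \<bar>C\<bar> + 1"]) auto
qed

lemma nn_integral_gain_le:
  assumes adm: "dual_admissible M1 M2 c q \<mu>1 \<mu>2 b g2" and le: "\<And>x. b x \<le> g1 x"
  shows "(\<integral>\<^sup>+x. \<integral>\<^sup>+y. ennreal ((g1 x - b x) * max (b x + g2 y - c (x, y)) 0 powr (q - 1)) \<partial>M2 \<partial>M1)
    \<le> ennreal (\<kappa> * (\<integral>x. (g1 x - b x) * \<mu>1 x \<partial>M1))"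
proof -
  have [measurable]: "b \<in> borel_measurable M1"
    and b_int: "integrable (M1 \<Otimes>\<^sub>M M2) (excess b g2)"
    using adm by (auto simp: dual_admissible_def)
  have pw: "(g1 (fst z) - b (fst z)) * max (b (fst z) + g2 (snd z) - c z) 0 powr (q - 1)
      \<le> (excess g1 g2 z - excess b g2 z) / q" for z
  proof -
    have "q * max (b (fst z) + g2 (snd z) - c z) 0 powr (q - 1)
        * ((g1 (fst z) + g2 (snd z) - c z) - (b (fst z) + g2 (snd z) - c z))
        \<le> excess g1 g2 z - excess b g2 z"
      using q_gt_1 le[of "fst z"] by (intro pos_part_powr_diff_ge) auto
    then show ?thesis using q_gt_1 by (simp add: le_divide_eq mult.commute mult.left_commute)
  qed
  have nonneg: "0 \<le> (excess g1 g2 z - excess b g2 z) / q" for z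
    using pw[of z] le[of "fst z"] by (smt (verit) mult_nonneg_nonneg powr_ge_zero)
  have "(\<integral>z. (excess g1 g2 z - excess b g2 z) / q \<partial>(M1 \<Otimes>\<^sub>M M2))
      = - (\<integral>z. excess b g2 z - excess g1 g2 z \<partial>(M1 \<Otimes>\<^sub>M M2)) / q"
    by (subst integral_minus[symmetric]) simp
  also have "\<dots> \<le> - (q * \<kappa> * (\<integral>x. (b x - g1 x) * \<mu>1 x \<partial>M1)) / q"
    using first_variation[OF adm] q_gt_1 by (intro divide_right_mono) auto
  also have "\<dots> = \<kappa> * (\<integral>x. (g1 x - b x) * \<mu>1 x \<partial>M1)"
  proof -
    have "(\<integral>x. (g1 x - b x) * \<mu>1 x \<partial>M1) = - (\<integral>x. (b x - g1 x) * \<mu>1 x \<partial>M1)"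
      by (subst integral_minus[symmetric]) (simp add: algebra_simps)
    then show ?thesis using q_gt_1 by simp
  qed
  finally have var: "(\<integral>z. (excess g1 g2 z - excess b g2 z) / q \<partial>(M1 \<Otimes>\<^sub>M M2))
      \<le> \<kappa> * (\<integral>x. (g1 x - b x) * \<mu>1 x \<partial>M1)" .
  have "(\<integral>\<^sup>+x. \<integral>\<^sup>+y. ennreal ((g1 x - b x) * max (b x + g2 y - c (x, y)) 0 powr (q - 1)) \<partial>M2 \<partial>M1)
      = (\<integral>\<^sup>+z. ennreal ((g1 (fst z) - b (fst z)) * max (b (fst z) + g2 (snd z) - c z) 0 powr (q - 1))
          \<partial>(M1 \<Otimes>\<^sub>M M2))"
    using M2.nn_integral_fst[of "\<lambda>z. ennreal ((g1 (fst z) - b (fst z))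
      * max (b (fst z) + g2 (snd z) - c z) 0 powr (q - 1))" M1] by simp
  also have "\<dots> \<le> (\<integral>\<^sup>+z. ennreal ((excess g1 g2 z - excess b g2 z) / q) \<partial>(M1 \<Otimes>\<^sub>M M2))"
    using pw by (intro nn_integral_mono ennreal_leI) auto
  also have "\<dots> = ennreal (\<integral>z. (excess g1 g2 z - excess b g2 z) / q \<partial>(M1 \<Otimes>\<^sub>M M2))"
    using excess_integrable b_int nonneg by (intro nn_integral_eq_integral) auto
  also have "\<dots> \<le> ennreal (\<kappa> * (\<integral>x. (g1 x - b x) * \<mu>1 x \<partial>M1))"
    using var by (rule ennreal_leI)
  finally show ?thesis .
qed


lemma dual_admissible_min:
  assumes h[measurable]: "h \<in> borel_measurable M1"
    and h_int: "integrable M1 h" "integrable M1 (\<lambda>x. h x * \<mu>1 x)"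
  shows "dual_admissible M1 M2 c q \<mu>1 \<mu>2 (\<lambda>x. min (g1 x) (h x)) g2"
  unfolding dual_admissible_def
proof (intro conjI)
  show "integrable M1 (\<lambda>x. min (g1 x) (h x))"
    by (rule Bochner_Integration.integrable_bound[where f="\<lambda>x. \<bar>g1 x\<bar> + \<bar>h x\<bar>"])
       (use g1_integrable h_int(1) in auto)
  show "integrable M1 (\<lambda>x. min (g1 x) (h x) * \<mu>1 x)"
    by (rule Bochner_Integration.integrable_bound[where f="\<lambda>x. \<bar>g1 x * \<mu>1 x\<bar> + \<bar>h x * \<mu>1 x\<bar>"])
       (use g1_\<mu>1_integrable h_int(2) in \<open>auto simp: min_def\<close>)
  show "integrable (M1 \<Otimes>\<^sub>M M2) (excess (\<lambda>x. min (g1 x) (h x)) g2)"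
  proof (rule Bochner_Integration.integrable_bound[OF excess_integrable])
    show "AE z in M1 \<Otimes>\<^sub>M M2. norm (excess (\<lambda>x. min (g1 x) (h x)) g2 z) \<le> norm (excess g1 g2 z)"
      using q_gt_1 by (intro AE_I2) (auto intro!: powr_mono2)
  qed measurable
qed (use g2_integrable admissible in \<open>simp_all add: dual_admissible_def\<close>)

lemma AE_le_of_slice_excess_gt:
  assumes h[measurable]: "h \<in> borel_measurable M1"
    and h_int: "integrable M1 h" "integrable M1 (\<lambda>x. h x * \<mu>1 x)"
    and gt: "\<And>x. x \<in> space M1 \<Longrightarrow>
      ennreal (\<kappa> * \<mu>1 x) < (\<integral>\<^sup>+y. max (h x + g2 y - c (x, y)) 0 powr (q - 1) \<partial>M2)"
  shows "AE x in M1. g1 x \<le> h x"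
proof -
  define b where "b x = min (g1 x) (h x)" for x
  have adm: "dual_admissible M1 M2 c q \<mu>1 \<mu>2 b g2"
    unfolding b_def using dual_admissible_min[OF h h_int] .
  have [measurable]: "b \<in> borel_measurable M1" and b_\<mu>1: "integrable M1 (\<lambda>x. b x * \<mu>1 x)"
    using adm by (auto simp: dual_admissible_def)
  define G where "G x = (\<integral>\<^sup>+y. ennreal ((g1 x - b x) * max (b x + g2 y - c (x, y)) 0 powr (q - 1)) \<partial>M2)" for x
  define f where "f x = ennreal (\<kappa> * (g1 x - b x) * \<mu>1 x)" for x
  have f_int: "integrable M1 (\<lambda>x. \<kappa> * (g1 x - b x) * \<mu>1 x)"
    using g1_\<mu>1_integrable b_\<mu>1 by (simp add: algebra_simps)
  have f_nonneg: "AE x in M1. 0 \<le> \<kappa> * (g1 x - b x) * \<mu>1 x"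
    using \<mu>1_ge_\<delta> \<delta>_pos \<kappa>_pos by (auto elim!: eventually_mono simp: b_def)
  have "(\<integral>\<^sup>+x. G x \<partial>M1) \<le> ennreal (\<kappa> * (\<integral>x. (g1 x - b x) * \<mu>1 x \<partial>M1))"
    unfolding G_def by (rule nn_integral_gain_le[OF adm]) (simp add: b_def)
  also have "\<dots> = (\<integral>\<^sup>+x. f x \<partial>M1)"
    unfolding f_def using f_int f_nonneg by (subst nn_integral_eq_integral) (auto simp: mult.assoc)
  finally have Gf: "(\<integral>\<^sup>+x. G x \<partial>M1) \<le> (\<integral>\<^sup>+x. f x \<partial>M1)" .
  have G_measurable[measurable]: "G \<in> borel_measurable M1" unfolding G_def by measurable
  have f_measurable[measurable]: "f \<in> borel_measurable M1" unfolding f_def by measurable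
  have G_eq: "G x = ennreal (g1 x - b x) * (\<integral>\<^sup>+y. max (h x + g2 y - c (x, y)) 0 powr (q - 1) \<partial>M2)"
    if "x \<in> space M1" for x
  proof (cases "g1 x \<le> h x")
    case False
    have [measurable]: "(\<lambda>y. c (x, y)) \<in> borel_measurable M2" using that by measurable
    from False have "b x = h x" by (simp add: b_def)
    with False show ?thesis unfolding G_def
      by (subst nn_integral_cmult[symmetric]) (use that in \<open>auto intro!: nn_integral_cong simp: ennreal_mult\<close>)
  qed (simp add: G_def b_def)
  have f_eq: "f x = ennreal (g1 x - b x) * ennreal (\<kappa> * \<mu>1 x)" for x
    unfolding f_def by (subst ennreal_mult'[symmetric]) (auto simp: b_def ac_simps)
  have "AE x in M1. \<not> h x < g1 x"
  proof (rule AE_not_of_nn_integral_le[OF f_measurable G_measurable Gf])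
    show "(\<integral>\<^sup>+x. f x \<partial>M1) \<noteq> \<infinity>"
      unfolding f_def using f_int f_nonneg by (subst nn_integral_eq_integral) auto
    show "f x \<le> G x" if "x \<in> space M1" for x
      unfolding G_eq[OF that] f_eq using gt[OF that] by (intro mult_left_mono) auto
    show "f x < G x" if "x \<in> space M1" "h x < g1 x" for x
      unfolding G_eq[OF that(1)] f_eq using gt[OF that(1)] that(2)
      by (intro ennreal_mult_strict_left_mono) (auto simp: b_def)
  qed
  then show ?thesis by (auto elim!: eventually_mono)
qed

lemma upper_bound: "\<exists>K. AE x in M1. g1 x \<le> K + majorant x"
proof -
  obtain K where K: "\<forall>x\<in>space M1. ennreal (\<kappa> * \<mu>1 x)
      < (\<integral>\<^sup>+y. max (K + majorant x + g2 y - c (x, y)) 0 powr (q - 1) \<partial>M2)"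
    using slice_excess_gt by blast
  have "AE x in M1. g1 x \<le> K + majorant x"
    using integrable_majorant integrable_majorant_mult_\<mu>1 \<mu>1_integrable K
    by (intro AE_le_of_slice_excess_gt) (auto simp: distrib_right)
  then show ?thesis by blast
qed

lemma integrable_abs_powr_fst: "integrable M1 (\<lambda>x. \<bar>g1 x\<bar> powr q)"
proof -
  obtain L K where L: "AE x in M1. - L \<le> g1 x" and K: "AE x in M1. g1 x \<le> K + majorant x"
    using lower_bound upper_bound by blast
  define B where "B = \<bar>L\<bar> + \<bar>K\<bar>"
  show ?thesis
  proof (rule Bochner_Integration.integrable_bound)
    show "integrable M1 (\<lambda>x. 2 powr q * (B powr q + majorant x powr q))"
      using integrable_majorant_powr_q by auto
    show "AE x in M1. norm (\<bar>g1 x\<bar> powr q) \<le> norm (2 powr q * (B powr q + majorant x powr q))"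
      using L K
    proof eventually_elim
      case (elim x)
      then have "\<bar>g1 x\<bar> \<le> B + majorant x" using majorant_nonneg[of x] by (auto simp: B_def)
      then have "\<bar>g1 x\<bar> powr q \<le> (B + majorant x) powr q" using q_gt_1 by (intro powr_mono2) auto
      also have "\<dots> \<le> 2 powr q * (B powr q + majorant x powr q)"
        using q_gt_1 majorant_nonneg[of x] by (intro powr_add_le) (auto simp: B_def)
      finally show ?case by simp
    qed
  qed simp
qed

end

lemma dual_minimizer_swap:
  assumes "dual_minimizer M1 M2 c \<mu>1 \<mu>2 g1 g2 p q \<kappa> \<delta> c0 C"
  shows "dual_minimizer M2 M1 (\<lambda>z. c (snd z, fst z)) \<mu>2 \<mu>1 g2 g1 p q \<kappa> \<delta> c0 C"
proof -
  interpret dual_minimizer M1 M2 c \<mu>1 \<mu>2 g1 g2 p q \<kappa> \<delta> c0 C by (fact assms)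
  have objective_swap: "dual_objective M2 M1 (\<lambda>z. c (snd z, fst z)) q \<kappa> \<mu>2 \<mu>1 b2 b1
      = dual_objective M1 M2 c q \<kappa> \<mu>1 \<mu>2 b1 b2"
    if "dual_admissible M1 M2 c q \<mu>1 \<mu>2 b1 b2" for b1 b2
    using that by (intro P.dual_objective_swap) (auto simp: dual_admissible_def)
  have c_swap_measurable: "(\<lambda>z. c (snd z, fst z)) \<in> borel_measurable (M2 \<Otimes>\<^sub>M M1)" by measurable
  have c_swap_bounds: "c0 \<le> c (snd z, fst z) \<and> c (snd z, fst z) \<le> C" if "z \<in> space (M2 \<Otimes>\<^sub>M M1)" for z
    using c_bounds that by (auto simp: space_pair_measure)
  have admissible_swap: "dual_admissible M2 M1 (\<lambda>z. c (snd z, fst z)) q \<mu>2 \<mu>1 g2 g1"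
    using admissible P.dual_admissible_swap by blast
  have minimal_swap: "dual_objective M2 M1 (\<lambda>z. c (snd z, fst z)) q \<kappa> \<mu>2 \<mu>1 g2 g1
      \<le> dual_objective M2 M1 (\<lambda>z. c (snd z, fst z)) q \<kappa> \<mu>2 \<mu>1 b2 b1"
    if "dual_admissible M2 M1 (\<lambda>z. c (snd z, fst z)) q \<mu>2 \<mu>1 b2 b1" for b2 b1
  proof -
    have adm: "dual_admissible M1 M2 c q \<mu>1 \<mu>2 b1 b2" using that P.dual_admissible_swap by blast
    show ?thesis using minimal[OF adm] unfolding objective_swap[OF adm] objective_swap[OF admissible] .
  qed
  show ?thesis
    by (rule dual_minimizer.intro[OF finite2 finite1 nontrivial2 nontrivial1 p_gt_1 conjugate p_ge_2
          \<kappa>_pos \<delta>_pos c_swap_measurable c_swap_bounds \<mu>2_measurable \<mu>1_measurable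
          \<mu>2_ge_\<delta> \<mu>1_ge_\<delta> \<mu>2_Lp \<mu>1_Lp admissible_swap minimal_swap])
qed

context dual_minimizer
begin

lemma integrable_abs_powr_snd: "integrable M2 (\<lambda>y. \<bar>g2 y\<bar> powr q)"
  using dual_minimizer.integrable_abs_powr_fst[OF dual_minimizer_swap[OF dual_minimizer_axioms]] .

end

section \<open>Lebesgue measure on compact sets\<close>

lemma AE_lebesgue_on_iff_lborel:
  fixes S :: "'c::euclidean_space set"
  assumes "S \<in> sets borel"
  shows "(AE x in lebesgue_on S. P x) \<longleftrightarrow> (AE x in lborel. x \<in> S \<longrightarrow> P x)"
proof -
  have "(AE x in lebesgue_on S. P x) \<longleftrightarrow> (AE x in lebesgue. x \<in> S \<longrightarrow> P x)"
    using assms by (intro AE_restrict_space_iff) auto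
  also have "\<dots> \<longleftrightarrow> (AE x in lborel. x \<in> S \<longrightarrow> P x)" by (rule AE_completion_iff)
  finally show ?thesis .
qed

lemma AE_density_indicator_iff_lborel:
  fixes S :: "'c::euclidean_space set"
  assumes "S \<in> sets borel"
  shows "(AE x in density lborel (indicator S). P x) \<longleftrightarrow> (AE x in lborel. x \<in> S \<longrightarrow> P x)"
  using assms by (subst AE_density) (auto simp: indicator_def)

lemma measurable_density_indicator_lborel:
  "measurable (density lborel (indicator S)) N = measurable borel N"
  by (rule measurable_cong_sets) auto

lemma borel_measurable_lebesgue_on_of_borel:
  fixes f :: "'c::euclidean_space \<Rightarrow> real"
  assumes "f \<in> borel_measurable borel"
  shows "f \<in> borel_measurable (lebesgue_on S)"
  by (rule measurable_restrict_space1, rule measurable_completion) (use assms in simp)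

lemma borel_measurable_fst_borel[measurable]:
  fixes f :: "'c::euclidean_space \<Rightarrow> real"
  assumes "f \<in> borel_measurable borel"
  shows "(\<lambda>z. f (fst z)) \<in> borel_measurable (borel :: ('c \<times> 'd::euclidean_space) measure)"
  using measurable_compose[OF measurable_fst[of borel "borel :: 'd measure"] assms]
  by (simp add: borel_prod)

lemma borel_measurable_snd_borel[measurable]:
  fixes f :: "'d::euclidean_space \<Rightarrow> real"
  assumes "f \<in> borel_measurable borel"
  shows "(\<lambda>z. f (snd z)) \<in> borel_measurable (borel :: ('c::euclidean_space \<times> 'd) measure)"
  using measurable_compose[OF measurable_snd[of "borel :: 'c measure" borel] assms]
  by (simp add: borel_prod)

lemma
  fixes S :: "'c::euclidean_space set" and f :: "'c \<Rightarrow> real"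
  assumes S: "S \<in> sets borel" and f: "f \<in> borel_measurable borel"
  shows integrable_lebesgue_on_iff_density:
      "integrable (lebesgue_on S) f \<longleftrightarrow> integrable (density lborel (indicator S)) f"
    and integral_lebesgue_on_eq_density:
      "integral\<^sup>L (lebesgue_on S) f = integral\<^sup>L (density lborel (indicator S)) f"
proof -
  have [measurable]: "f \<in> borel_measurable lborel" using f by simp
  have [measurable]: "(\<lambda>x. indicator S x *\<^sub>R f x) \<in> borel_measurable lborel" using S by measurable
  have d: "density lborel (indicator S) = density lborel (\<lambda>x. ennreal (indicator S x))"
    by (simp add: ennreal_indicator)
  have "integrable (lebesgue_on S) f \<longleftrightarrow> integrable lebesgue (\<lambda>x. indicator S x *\<^sub>R f x)"
    using S by (intro integrable_restrict_space) auto
  also have "\<dots> \<longleftrightarrow> integrable lborel (\<lambda>x. indicator S x *\<^sub>R f x)"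
    by (rule integrable_completion) measurable
  also have "\<dots> \<longleftrightarrow> integrable (density lborel (indicator S)) f"
    unfolding d using S by (subst integrable_density) auto
  finally show "integrable (lebesgue_on S) f \<longleftrightarrow> integrable (density lborel (indicator S)) f" .
  have "integral\<^sup>L (lebesgue_on S) f = integral\<^sup>L lebesgue (\<lambda>x. indicator S x *\<^sub>R f x)"
    using S by (intro integral_restrict_space) auto
  also have "\<dots> = integral\<^sup>L lborel (\<lambda>x. indicator S x *\<^sub>R f x)"
    by (rule integral_completion) measurable
  also have "\<dots> = integral\<^sup>L (density lborel (indicator S)) f"
    unfolding d using S by (subst integral_density) auto
  finally show "integral\<^sup>L (lebesgue_on S) f = integral\<^sup>L (density lborel (indicator S)) f" .
qed

lemma
  fixes S :: "'c::euclidean_space set" and f g :: "'c \<Rightarrow> real"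
  assumes S: "S \<in> sets borel" and f: "f \<in> borel_measurable (lebesgue_on S)"
    and g: "g \<in> borel_measurable borel" and fg: "AE x in lborel. x \<in> S \<longrightarrow> f x = g x"
  shows integrable_lebesgue_on_iff_density_AE:
      "integrable (lebesgue_on S) f \<longleftrightarrow> integrable (density lborel (indicator S)) g"
    and integral_lebesgue_on_eq_density_AE:
      "integral\<^sup>L (lebesgue_on S) f = integral\<^sup>L (density lborel (indicator S)) g"
proof -
  have ae: "AE x in lebesgue_on S. f x = g x" using fg unfolding AE_lebesgue_on_iff_lborel[OF S] .
  have gl: "g \<in> borel_measurable (lebesgue_on S)" using g by (rule borel_measurable_lebesgue_on_of_borel)
  show "integrable (lebesgue_on S) f \<longleftrightarrow> integrable (density lborel (indicator S)) g"
    using integrable_cong_AE[OF f gl ae] integrable_lebesgue_on_iff_density[OF S g] by simp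
  show "integral\<^sup>L (lebesgue_on S) f = integral\<^sup>L (density lborel (indicator S)) g"
    using integral_cong_AE[OF f gl ae] integral_lebesgue_on_eq_density[OF S g] by simp
qed

lemma finite_measure_density_indicator:
  fixes S :: "'c::euclidean_space set"
  assumes "compact S"
  shows "finite_measure (density lborel (indicator S))"
proof (rule finite_measureI)
  have S: "S \<in> sets borel" using assms by (simp add: compact_imp_closed)
  have "emeasure (density lborel (indicator S)) (space (density lborel (indicator S))) = emeasure lborel S"
    using S by (simp add: emeasure_density nn_integral_indicator)
  then show "emeasure (density lborel (indicator S)) (space (density lborel (indicator S))) \<noteq> \<infinity>"
    using emeasure_compact_finite[OF assms] by simp
qed

lemma density_indicator_Times:
  fixes S1 S2 :: "'c::euclidean_space set"
  assumes "compact S1" "compact S2"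
  shows "density lborel (indicator S1) \<Otimes>\<^sub>M density lborel (indicator S2)
    = density lborel (indicator (S1 \<times> S2))"
proof -
  have S: "S1 \<in> sets borel" "S2 \<in> sets borel" using assms by (simp_all add: compact_imp_closed)
  interpret S2: finite_measure "density lborel (indicator S2)"
    using finite_measure_density_indicator assms(2) .
  have "density lborel (indicator S1) \<Otimes>\<^sub>M density lborel (indicator S2)
      = density (lborel \<Otimes>\<^sub>M lborel) (\<lambda>(x, y). indicator S1 x * indicator S2 y)"
    using S by (intro pair_measure_density)
      (auto simp: lborel.sigma_finite_measure_axioms S2.sigma_finite_measure_axioms)
  also have "(\<lambda>(x, y). indicator S1 x * indicator S2 y :: ennreal) = indicator (S1 \<times> S2)"
    by (auto simp: fun_eq_iff indicator_def)
  finally show ?thesis by (simp only: lborel_prod)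
qed

lemma AE_lborel_fst:
  assumes "AE x in lborel. P x"
  shows "AE z in (lborel :: ('c::euclidean_space \<times> 'd::euclidean_space) measure). P (fst z)"
proof -
  obtain N where N: "{x \<in> space lborel. \<not> P x} \<subseteq> N" "emeasure lborel N = 0" "N \<in> sets lborel"
    using assms by (rule AE_E)
  have "emeasure (lborel \<Otimes>\<^sub>M (lborel :: 'd measure)) (N \<times> UNIV) = emeasure lborel N * emeasure lborel (UNIV :: 'd set)"
    by (rule lborel.emeasure_pair_measure_Times) (use N in simp_all)
  then have "N \<times> UNIV \<in> null_sets (lborel \<Otimes>\<^sub>M (lborel :: 'd measure))"
    unfolding null_sets_def using N by (auto intro!: pair_measureI)
  moreover have "{z \<in> space (lborel \<Otimes>\<^sub>M (lborel :: 'd measure)). \<not> P (fst z)} \<subseteq> N \<times> UNIV"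
    using N(1) by (auto simp: space_pair_measure)
  ultimately have "AE z in lborel \<Otimes>\<^sub>M (lborel :: 'd measure). P (fst z)" by (intro AE_I')
  then show ?thesis by (simp only: lborel_prod)
qed

lemma AE_lborel_snd:
  assumes "AE y in lborel. P y"
  shows "AE z in (lborel :: ('c::euclidean_space \<times> 'd::euclidean_space) measure). P (snd z)"
proof -
  obtain N where N: "{y \<in> space lborel. \<not> P y} \<subseteq> N" "emeasure lborel N = 0" "N \<in> sets lborel"
    using assms by (rule AE_E)
  have "emeasure ((lborel :: 'c measure) \<Otimes>\<^sub>M lborel) (UNIV \<times> N) = emeasure lborel (UNIV :: 'c set) * emeasure lborel N"
    by (rule lborel.emeasure_pair_measure_Times) (use N in simp_all)
  then have "UNIV \<times> N \<in> null_sets ((lborel :: 'c measure) \<Otimes>\<^sub>M lborel)"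
    unfolding null_sets_def using N by (auto intro!: pair_measureI)
  moreover have "{z \<in> space ((lborel :: 'c measure) \<Otimes>\<^sub>M lborel). \<not> P (snd z)} \<subseteq> UNIV \<times> N"
    using N(1) by (auto simp: space_pair_measure)
  ultimately have "AE z in (lborel :: 'c measure) \<Otimes>\<^sub>M lborel. P (snd z)" by (intro AE_I')
  then show ?thesis by (simp only: lborel_prod)
qed

definition borel_rep :: "'c::euclidean_space set \<Rightarrow> ('c \<Rightarrow> real) \<Rightarrow> 'c \<Rightarrow> real" where
  "borel_rep S f = (SOME g. g \<in> borel_measurable borel \<and> (AE x in lborel. x \<in> S \<longrightarrow> f x = g x))"

lemma
  fixes S :: "'c::euclidean_space set" and f :: "'c \<Rightarrow> real"
  assumes S: "S \<in> sets borel" and f: "f \<in> borel_measurable (lebesgue_on S)"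
  shows borel_rep_measurable: "borel_rep S f \<in> borel_measurable borel"
    and AE_eq_borel_rep: "AE x in lborel. x \<in> S \<longrightarrow> f x = borel_rep S f x"
proof -
  have "(\<lambda>x. indicator S x *\<^sub>R f x) \<in> borel_measurable lebesgue"
    using f S by (subst borel_measurable_restrict_space_iff[symmetric]) auto
  then obtain g where g: "g \<in> borel_measurable lborel" "AE x in lborel. indicator S x *\<^sub>R f x = g x"
    using completion_ex_borel_measurable_real by blast
  from g(2) have "AE x in lborel. x \<in> S \<longrightarrow> f x = g x" by eventually_elim auto
  with g(1) have "\<exists>g. g \<in> borel_measurable borel \<and> (AE x in lborel. x \<in> S \<longrightarrow> f x = g x)"
    by auto
  then have "borel_rep S f \<in> borel_measurable borel \<and> (AE x in lborel. x \<in> S \<longrightarrow> f x = borel_rep S f x)"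
    unfolding borel_rep_def by (rule someI_ex)
  then show "borel_rep S f \<in> borel_measurable borel" "AE x in lborel. x \<in> S \<longrightarrow> f x = borel_rep S f x"
    by auto
qed

lemma Lp_on_of_borel_rep:
  fixes S :: "'c::euclidean_space set" and f :: "'c \<Rightarrow> real"
  assumes S: "S \<in> sets borel" and f[measurable]: "f \<in> borel_measurable (lebesgue_on S)"
    and int: "integrable (density lborel (indicator S)) (\<lambda>x. \<bar>borel_rep S f x\<bar> powr r)"
  shows "f \<in> Lp_on r S"
proof -
  have [measurable]: "borel_rep S f \<in> borel_measurable borel" by (rule borel_rep_measurable[OF S f])
  have ae: "AE x in lborel. x \<in> S \<longrightarrow> \<bar>f x\<bar> powr r = \<bar>borel_rep S f x\<bar> powr r"
    using AE_eq_borel_rep[OF S f] by eventually_elim auto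
  have "integrable (lebesgue_on S) (\<lambda>x. \<bar>f x\<bar> powr r)"
    using integrable_lebesgue_on_iff_density_AE[OF S _ _ ae] int by simp
  then show ?thesis unfolding Lp_on_def using f by blast
qed

section \<open>Minimizers of the Lebesgue problem\<close>

lemma pos_part_div_Lp_on_iff:
  fixes f :: "'c::euclidean_space \<Rightarrow> real"
  assumes \<gamma>: "0 < \<gamma>"
  shows "(\<lambda>z. max (f z) 0 / \<gamma>) \<in> Lp_on q S \<longleftrightarrow>
    (\<lambda>z. max (f z) 0) \<in> borel_measurable (lebesgue_on S) \<and> integrable (lebesgue_on S) (\<lambda>z. max (f z) 0 powr q)"
proof -
  have "(\<lambda>z. max (f z) 0 / \<gamma>) \<in> borel_measurable (lebesgue_on S)
      \<longleftrightarrow> (\<lambda>z. max (f z) 0) \<in> borel_measurable (lebesgue_on S)"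
  proof
    assume m: "(\<lambda>z. max (f z) 0 / \<gamma>) \<in> borel_measurable (lebesgue_on S)"
    have eq: "(\<lambda>z. \<gamma> * (max (f z) 0 / \<gamma>)) = (\<lambda>z. max (f z) 0)" using \<gamma> by simp
    show "(\<lambda>z. max (f z) 0) \<in> borel_measurable (lebesgue_on S)"
      using borel_measurable_times[OF borel_measurable_const m, of \<gamma>] unfolding eq .
  next
    assume "(\<lambda>z. max (f z) 0) \<in> borel_measurable (lebesgue_on S)"
    from borel_measurable_divide[OF this borel_measurable_const]
    show "(\<lambda>z. max (f z) 0 / \<gamma>) \<in> borel_measurable (lebesgue_on S)" .
  qed
  moreover have "\<bar>max (f z) 0 / \<gamma>\<bar> powr q = inverse (\<gamma> powr q) * max (f z) 0 powr q" for z
  proof -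
    have "\<bar>max (f z) 0 / \<gamma>\<bar> powr q = (max (f z) 0 / \<gamma>) powr q" using \<gamma> by simp
    also have "\<dots> = max (f z) 0 powr q / \<gamma> powr q" using \<gamma> by (simp add: powr_divide)
    also have "\<dots> = inverse (\<gamma> powr q) * max (f z) 0 powr q" by (rule divide_inverse_commute)
    finally show ?thesis .
  qed
  then have "integrable (lebesgue_on S) (\<lambda>z. \<bar>max (f z) 0 / \<gamma>\<bar> powr q)
      \<longleftrightarrow> integrable (lebesgue_on S) (\<lambda>z. max (f z) 0 powr q)"
    using \<gamma> by (simp only: integrable_mult_left_iff) simp
  ultimately show ?thesis unfolding Lp_on_def mem_Collect_eq by blast
qed

lemma measure_density_indicator_pos:
  fixes S :: "'c::euclidean_space set" and f :: "'c \<Rightarrow> real"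
  assumes S: "compact S" and f: "(\<integral>x. f x \<partial>lebesgue_on S) \<noteq> 0"
  shows "0 < measure (density lborel (indicator S)) (space (density lborel (indicator S)))"
proof (rule ccontr)
  have S_borel: "S \<in> sets borel" using S by (simp add: compact_imp_closed)
  interpret finite_measure "density lborel (indicator S)"
    using finite_measure_density_indicator[OF S] .
  assume "\<not> ?thesis"
  then have "measure (density lborel (indicator S)) (space (density lborel (indicator S))) = 0"
    using measure_nonneg[of "density lborel (indicator S)" "space (density lborel (indicator S))"]
    by linarith
  then have "emeasure (density lborel (indicator S)) (space (density lborel (indicator S))) = 0"
    by (simp add: emeasure_eq_measure)
  then have "emeasure lborel S = 0"
    using S_borel by (simp add: emeasure_density nn_integral_indicator)
  then have "AE x in lborel. x \<notin> S"
    using S_borel by (intro AE_not_in) (simp add: null_sets_def)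
  then have "AE x in lebesgue_on S. f x = 0"
    unfolding AE_lebesgue_on_iff_lborel[OF S_borel] by eventually_elim simp
  then show False using f by (simp add: integral_eq_zero_AE)
qed

lemma osum_borel:
  fixes b1 b2 :: "'c::euclidean_space \<Rightarrow> real"
  assumes [measurable]: "b1 \<in> borel_measurable borel" "b2 \<in> borel_measurable borel"
  shows "osum b1 b2 \<in> borel_measurable (borel :: ('c \<times> 'c) measure)"
proof -
  have "osum b1 b2 = (\<lambda>z. b1 (fst z) + b2 (snd z))" by (auto simp: osum_def split_beta)
  moreover have "(\<lambda>z. b1 (fst z) + b2 (snd z)) \<in> borel_measurable (borel :: ('c \<times> 'c) measure)"
    by measurable
  ultimately show ?thesis by simp
qed

locale lebesgue_dual_minimizer =
  fixes \<Omega>1 \<Omega>2 :: "'a::euclidean_space set" and c :: "'a \<times> 'a \<Rightarrow> real"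
    and \<gamma> p q \<delta> :: real and \<mu>1 \<mu>2 a1 a2 :: "'a \<Rightarrow> real"
  assumes compact1: "compact \<Omega>1" and compact2: "compact \<Omega>2"
    and c_continuous: "continuous_on (\<Omega>1 \<times> \<Omega>2) c"
    and \<gamma>_pos: "0 < \<gamma>" and p_gt_1: "1 < p" and conjugate: "1 / p + 1 / q = 1" and p_ge_2: "2 \<le> p"
    and \<delta>_pos: "0 < \<delta>"
    and \<mu>1_Lp: "\<mu>1 \<in> Lp_on p \<Omega>1" and \<mu>2_Lp: "\<mu>2 \<in> Lp_on p \<Omega>2"
    and \<mu>1_ge_\<delta>: "AE x in lebesgue_on \<Omega>1. \<delta> \<le> \<mu>1 x" and \<mu>2_ge_\<delta>: "AE x in lebesgue_on \<Omega>2. \<delta> \<le> \<mu>2 x"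
    and \<mu>1_mass: "(\<integral>x. \<mu>1 x \<partial>lebesgue_on \<Omega>1) = 1" and \<mu>2_mass: "(\<integral>x. \<mu>2 x \<partial>lebesgue_on \<Omega>2) = 1"
    and minimizer: "is_minimizer c \<gamma> q \<mu>1 \<mu>2 \<Omega>1 \<Omega>2 a1 a2"
begin

abbreviation "M1 \<equiv> density lborel (indicator \<Omega>1) :: 'a measure"
abbreviation "M2 \<equiv> density lborel (indicator \<Omega>2) :: 'a measure"

lemma sets_\<Omega>1[measurable]: "\<Omega>1 \<in> sets borel"
  and sets_\<Omega>2[measurable]: "\<Omega>2 \<in> sets borel"
  and sets_\<Omega>12[measurable]: "\<Omega>1 \<times> \<Omega>2 \<in> sets borel"
  using compact1 compact2 by (simp_all add: compact_imp_closed compact_Times)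

lemma M1_M2: "M1 \<Otimes>\<^sub>M M2 = density lborel (indicator (\<Omega>1 \<times> \<Omega>2))"
  using density_indicator_Times[OF compact1 compact2] .

lemma minimizer_feasible: "feasible c \<gamma> q \<mu>1 \<mu>2 \<Omega>1 \<Omega>2 a1 a2"
  using minimizer by (simp add: is_minimizer_def)

lemma a1_measurable[measurable]: "a1 \<in> borel_measurable (lebesgue_on \<Omega>1)"
  and a2_measurable[measurable]: "a2 \<in> borel_measurable (lebesgue_on \<Omega>2)"
  and \<mu>1_measurable[measurable]: "\<mu>1 \<in> borel_measurable (lebesgue_on \<Omega>1)"
  and \<mu>2_measurable[measurable]: "\<mu>2 \<in> borel_measurable (lebesgue_on \<Omega>2)"
  using minimizer_feasible \<mu>1_Lp \<mu>2_Lp unfolding feasible_def Lp_on_def mem_Collect_eq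
  by (blast dest: borel_measurable_integrable)+

definition "g1 = borel_rep \<Omega>1 a1"
definition "g2 = borel_rep \<Omega>2 a2"
definition "m1 = borel_rep \<Omega>1 \<mu>1"
definition "m2 = borel_rep \<Omega>2 \<mu>2"

lemma g1_borel[measurable]: "g1 \<in> borel_measurable borel"
  and g2_borel[measurable]: "g2 \<in> borel_measurable borel"
  and m1_borel[measurable]: "m1 \<in> borel_measurable borel"
  and m2_borel[measurable]: "m2 \<in> borel_measurable borel"
  unfolding g1_def g2_def m1_def m2_def
  by (simp_all add: borel_rep_measurable sets_\<Omega>1 sets_\<Omega>2)

lemma AE_eq_g1: "AE x in lborel. x \<in> \<Omega>1 \<longrightarrow> a1 x = g1 x"
  and AE_eq_g2: "AE x in lborel. x \<in> \<Omega>2 \<longrightarrow> a2 x = g2 x"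
  and AE_eq_m1: "AE x in lborel. x \<in> \<Omega>1 \<longrightarrow> \<mu>1 x = m1 x"
  and AE_eq_m2: "AE x in lborel. x \<in> \<Omega>2 \<longrightarrow> \<mu>2 x = m2 x"
  unfolding g1_def g2_def m1_def m2_def
  by (simp_all add: AE_eq_borel_rep sets_\<Omega>1 sets_\<Omega>2)

text \<open>The cost is only given on \<open>\<Omega>1 \<times> \<Omega>2\<close>; extending it by zero makes it Borel on the whole space.\<close>
definition c_ext :: "'a \<times> 'a \<Rightarrow> real" where
  "c_ext z = indicator (\<Omega>1 \<times> \<Omega>2) z * c z"

lemma c_ext_borel[measurable]: "c_ext \<in> borel_measurable borel"
  using borel_measurable_continuous_on_indicator[OF sets_\<Omega>12 c_continuous]
  by (simp add: c_ext_def[abs_def])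

lemma c_ext_bounded: "\<exists>B. \<forall>z. \<bar>c_ext z\<bar> \<le> B"
proof -
  have "compact (c ` (\<Omega>1 \<times> \<Omega>2))"
    using compact1 compact2 c_continuous by (intro compact_continuous_image compact_Times)
  then obtain B where "\<forall>z\<in>\<Omega>1 \<times> \<Omega>2. \<bar>c z\<bar> \<le> B"
    by (auto dest!: compact_imp_bounded simp: bounded_iff)
  then have "\<bar>c_ext z\<bar> \<le> max B 0" for z
    by (cases "z \<in> \<Omega>1 \<times> \<Omega>2") (auto simp: c_ext_def le_max_iff_disj)
  then show ?thesis by blast
qed

lemma
  fixes b1 b2 :: "'a \<Rightarrow> real"
  assumes [measurable]: "b1 \<in> borel_measurable borel" "b2 \<in> borel_measurable borel"
  shows integrable_excess_iff:
      "integrable (lebesgue_on (\<Omega>1 \<times> \<Omega>2)) (\<lambda>z. max (osum b1 b2 z - c z) 0 powr q)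
       \<longleftrightarrow> integrable (M1 \<Otimes>\<^sub>M M2) (\<lambda>z. max (b1 (fst z) + b2 (snd z) - c_ext z) 0 powr q)"
    and integral_excess_eq:
      "(\<integral>z. max (osum b1 b2 z - c z) 0 powr q \<partial>lebesgue_on (\<Omega>1 \<times> \<Omega>2))
       = (\<integral>z. max (b1 (fst z) + b2 (snd z) - c_ext z) 0 powr q \<partial>(M1 \<Otimes>\<^sub>M M2))"
proof -
  define F where "F z = max (b1 (fst z) + b2 (snd z) - c_ext z) 0 powr q" for z
  have F: "F \<in> borel_measurable borel" unfolding F_def by measurable
  have eq: "max (osum b1 b2 z - c z) 0 powr q = F z" if "z \<in> space (lebesgue_on (\<Omega>1 \<times> \<Omega>2))" for z
    using that unfolding F_def osum_def c_ext_def by (auto simp: split_beta)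
  have "integrable (lebesgue_on (\<Omega>1 \<times> \<Omega>2)) (\<lambda>z. max (osum b1 b2 z - c z) 0 powr q)
      \<longleftrightarrow> integrable (lebesgue_on (\<Omega>1 \<times> \<Omega>2)) F"
    using eq by (intro Bochner_Integration.integrable_cong) auto
  also have "\<dots> \<longleftrightarrow> integrable (M1 \<Otimes>\<^sub>M M2) F"
    unfolding M1_M2 by (rule integrable_lebesgue_on_iff_density[OF sets_\<Omega>12 F])
  finally show "integrable (lebesgue_on (\<Omega>1 \<times> \<Omega>2)) (\<lambda>z. max (osum b1 b2 z - c z) 0 powr q)
      \<longleftrightarrow> integrable (M1 \<Otimes>\<^sub>M M2) (\<lambda>z. max (b1 (fst z) + b2 (snd z) - c_ext z) 0 powr q)"
    unfolding F_def .
  have "(\<integral>z. max (osum b1 b2 z - c z) 0 powr q \<partial>lebesgue_on (\<Omega>1 \<times> \<Omega>2))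
      = (\<integral>z. F z \<partial>lebesgue_on (\<Omega>1 \<times> \<Omega>2))"
    using eq by (intro Bochner_Integration.integral_cong) auto
  also have "\<dots> = (\<integral>z. F z \<partial>(M1 \<Otimes>\<^sub>M M2))"
    unfolding M1_M2 by (rule integral_lebesgue_on_eq_density[OF sets_\<Omega>12 F])
  finally show "(\<integral>z. max (osum b1 b2 z - c z) 0 powr q \<partial>lebesgue_on (\<Omega>1 \<times> \<Omega>2))
      = (\<integral>z. max (b1 (fst z) + b2 (snd z) - c_ext z) 0 powr q \<partial>(M1 \<Otimes>\<^sub>M M2))"
    unfolding F_def .
qed

lemma
  fixes b1 b2 :: "'a \<Rightarrow> real"
  assumes b1[measurable]: "b1 \<in> borel_measurable borel" and b2[measurable]: "b2 \<in> borel_measurable borel"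
  shows integrable_lebesgue_on_mult_\<mu>1_iff:
      "integrable (lebesgue_on \<Omega>1) (\<lambda>x. b1 x * \<mu>1 x) \<longleftrightarrow> integrable M1 (\<lambda>x. b1 x * m1 x)"
    and integral_lebesgue_on_mult_\<mu>1:
      "(\<integral>x. b1 x * \<mu>1 x \<partial>lebesgue_on \<Omega>1) = (\<integral>x. b1 x * m1 x \<partial>M1)"
    and integrable_lebesgue_on_mult_\<mu>2_iff:
      "integrable (lebesgue_on \<Omega>2) (\<lambda>x. b2 x * \<mu>2 x) \<longleftrightarrow> integrable M2 (\<lambda>x. b2 x * m2 x)"
    and integral_lebesgue_on_mult_\<mu>2:
      "(\<integral>x. b2 x * \<mu>2 x \<partial>lebesgue_on \<Omega>2) = (\<integral>x. b2 x * m2 x \<partial>M2)"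
proof -
  have e1: "AE x in lborel. x \<in> \<Omega>1 \<longrightarrow> b1 x * \<mu>1 x = b1 x * m1 x"
    using AE_eq_m1 by eventually_elim auto
  have e2: "AE x in lborel. x \<in> \<Omega>2 \<longrightarrow> b2 x * \<mu>2 x = b2 x * m2 x"
    using AE_eq_m2 by eventually_elim auto
  note t1 = integrable_lebesgue_on_iff_density_AE[OF sets_\<Omega>1 _ borel_measurable_times[OF b1 m1_borel] e1]
    integral_lebesgue_on_eq_density_AE[OF sets_\<Omega>1 _ borel_measurable_times[OF b1 m1_borel] e1]
  note t2 = integrable_lebesgue_on_iff_density_AE[OF sets_\<Omega>2 _ borel_measurable_times[OF b2 m2_borel] e2]
    integral_lebesgue_on_eq_density_AE[OF sets_\<Omega>2 _ borel_measurable_times[OF b2 m2_borel] e2]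
  have "b1 \<in> borel_measurable (lebesgue_on \<Omega>1)" "b2 \<in> borel_measurable (lebesgue_on \<Omega>2)"
    using borel_measurable_lebesgue_on_of_borel[OF b1] borel_measurable_lebesgue_on_of_borel[OF b2]
    by blast+
  then have "(\<lambda>x. b1 x * \<mu>1 x) \<in> borel_measurable (lebesgue_on \<Omega>1)"
    "(\<lambda>x. b2 x * \<mu>2 x) \<in> borel_measurable (lebesgue_on \<Omega>2)"
    using \<mu>1_measurable \<mu>2_measurable by (blast intro: borel_measurable_times)+
  then show "integrable (lebesgue_on \<Omega>1) (\<lambda>x. b1 x * \<mu>1 x) \<longleftrightarrow> integrable M1 (\<lambda>x. b1 x * m1 x)"
    "(\<integral>x. b1 x * \<mu>1 x \<partial>lebesgue_on \<Omega>1) = (\<integral>x. b1 x * m1 x \<partial>M1)"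
    "integrable (lebesgue_on \<Omega>2) (\<lambda>x. b2 x * \<mu>2 x) \<longleftrightarrow> integrable M2 (\<lambda>x. b2 x * m2 x)"
    "(\<integral>x. b2 x * \<mu>2 x \<partial>lebesgue_on \<Omega>2) = (\<integral>x. b2 x * m2 x \<partial>M2)"
    using t1 t2 by blast+
qed

lemma c_lebesgue_measurable[measurable]: "c \<in> borel_measurable (lebesgue_on (\<Omega>1 \<times> \<Omega>2))"
  using c_continuous by (rule continuous_imp_measurable_on_sets_lebesgue) (use sets_\<Omega>12 in simp)

lemma pos_part_lebesgue_measurable:
  assumes "osum b1 b2 \<in> borel_measurable (lebesgue_on (\<Omega>1 \<times> \<Omega>2))"
  shows "(\<lambda>z. max (osum b1 b2 z - c z) 0) \<in> borel_measurable (lebesgue_on (\<Omega>1 \<times> \<Omega>2))"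
  by (intro borel_measurable_max borel_measurable_diff c_lebesgue_measurable borel_measurable_const assms)

lemma feasible_of_dual_admissible:
  fixes b1 b2 :: "'a \<Rightarrow> real"
  assumes b1[measurable]: "b1 \<in> borel_measurable borel" and b2[measurable]: "b2 \<in> borel_measurable borel"
    and adm: "dual_admissible M1 M2 c_ext q m1 m2 b1 b2"
  shows "feasible c \<gamma> q \<mu>1 \<mu>2 \<Omega>1 \<Omega>2 b1 b2"
    and "Lambda c \<gamma> q \<mu>1 \<mu>2 \<Omega>1 \<Omega>2 b1 b2 = dual_objective M1 M2 c_ext q (\<gamma> powr (q - 1)) m1 m2 b1 b2"
proof -
  have "osum b1 b2 \<in> borel_measurable (lebesgue_on (\<Omega>1 \<times> \<Omega>2))"
    by (rule borel_measurable_lebesgue_on_of_borel) (rule osum_borel[OF b1 b2])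
  then have "(\<lambda>z. max (osum b1 b2 z - c z) 0) \<in> borel_measurable (lebesgue_on (\<Omega>1 \<times> \<Omega>2))"
    by (rule pos_part_lebesgue_measurable)
  moreover have "integrable (lebesgue_on (\<Omega>1 \<times> \<Omega>2)) (\<lambda>z. max (osum b1 b2 z - c z) 0 powr q)"
    using adm unfolding integrable_excess_iff[OF b1 b2] dual_admissible_def by blast
  ultimately have "(\<lambda>z. max (osum b1 b2 z - c z) 0 / \<gamma>) \<in> Lp_on q (\<Omega>1 \<times> \<Omega>2)"
    unfolding pos_part_div_Lp_on_iff[OF \<gamma>_pos] by blast
  then show "feasible c \<gamma> q \<mu>1 \<mu>2 \<Omega>1 \<Omega>2 b1 b2"
    using adm unfolding feasible_def dual_admissible_def
      integrable_lebesgue_on_mult_\<mu>1_iff[OF b1 b2] integrable_lebesgue_on_mult_\<mu>2_iff[OF b1 b2]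
      integrable_lebesgue_on_iff_density[OF sets_\<Omega>1 b1] integrable_lebesgue_on_iff_density[OF sets_\<Omega>2 b2]
    by blast
  show "Lambda c \<gamma> q \<mu>1 \<mu>2 \<Omega>1 \<Omega>2 b1 b2 = dual_objective M1 M2 c_ext q (\<gamma> powr (q - 1)) m1 m2 b1 b2"
    unfolding Lambda_def dual_objective_def integral_excess_eq[OF b1 b2]
      integral_lebesgue_on_mult_\<mu>1[OF b1 b2] integral_lebesgue_on_mult_\<mu>2[OF b1 b2] ..
qed

lemma AE_osum_eq_reps: "AE z in lebesgue_on (\<Omega>1 \<times> \<Omega>2). osum a1 a2 z = osum g1 g2 z"
proof -
  have "AE z in (lborel :: ('a \<times> 'a) measure). fst z \<in> \<Omega>1 \<longrightarrow> a1 (fst z) = g1 (fst z)"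
    by (rule AE_lborel_fst[OF AE_eq_g1])
  moreover have "AE z in (lborel :: ('a \<times> 'a) measure). snd z \<in> \<Omega>2 \<longrightarrow> a2 (snd z) = g2 (snd z)"
    by (rule AE_lborel_snd[OF AE_eq_g2])
  ultimately have "AE z in lborel. z \<in> \<Omega>1 \<times> \<Omega>2 \<longrightarrow> osum a1 a2 z = osum g1 g2 z"
    by eventually_elim (auto simp: osum_def split_beta)
  then show ?thesis unfolding AE_lebesgue_on_iff_lborel[OF sets_\<Omega>12] .
qed

lemma
  shows integrable_excess_reps:
      "integrable (M1 \<Otimes>\<^sub>M M2) (\<lambda>z. max (g1 (fst z) + g2 (snd z) - c_ext z) 0 powr q)"
    and integral_excess_reps:
      "(\<integral>z. max (osum a1 a2 z - c z) 0 powr q \<partial>lebesgue_on (\<Omega>1 \<times> \<Omega>2))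
       = (\<integral>z. max (g1 (fst z) + g2 (snd z) - c_ext z) 0 powr q \<partial>(M1 \<Otimes>\<^sub>M M2))"
proof -
  have max_a_measurable: "(\<lambda>z. max (osum a1 a2 z - c z) 0) \<in> borel_measurable (lebesgue_on (\<Omega>1 \<times> \<Omega>2))"
    and excess_a: "integrable (lebesgue_on (\<Omega>1 \<times> \<Omega>2)) (\<lambda>z. max (osum a1 a2 z - c z) 0 powr q)"
    using minimizer_feasible unfolding feasible_def pos_part_div_Lp_on_iff[OF \<gamma>_pos] by blast+
  have "osum g1 g2 \<in> borel_measurable (lebesgue_on (\<Omega>1 \<times> \<Omega>2))"
    by (rule borel_measurable_lebesgue_on_of_borel) (rule osum_borel[OF g1_borel g2_borel])
  then have max_g_measurable: "(\<lambda>z. max (osum g1 g2 z - c z) 0) \<in> borel_measurable (lebesgue_on (\<Omega>1 \<times> \<Omega>2))"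
    by (rule pos_part_lebesgue_measurable)
  note excess_measurable = powr_real_measurable[OF max_a_measurable borel_measurable_const]
    powr_real_measurable[OF max_g_measurable borel_measurable_const]
  have excess_AE: "AE z in lebesgue_on (\<Omega>1 \<times> \<Omega>2).
      max (osum a1 a2 z - c z) 0 powr q = max (osum g1 g2 z - c z) 0 powr q"
    using AE_osum_eq_reps by eventually_elim simp
  show "integrable (M1 \<Otimes>\<^sub>M M2) (\<lambda>z. max (g1 (fst z) + g2 (snd z) - c_ext z) 0 powr q)"
    using excess_a integrable_cong_AE[OF excess_measurable excess_AE]
      integrable_excess_iff[OF g1_borel g2_borel] by blast
  show "(\<integral>z. max (osum a1 a2 z - c z) 0 powr q \<partial>lebesgue_on (\<Omega>1 \<times> \<Omega>2))
      = (\<integral>z. max (g1 (fst z) + g2 (snd z) - c_ext z) 0 powr q \<partial>(M1 \<Otimes>\<^sub>M M2))"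
    using integral_cong_AE[OF excess_measurable excess_AE]
      integral_excess_eq[OF g1_borel g2_borel] by (rule trans)
qed

lemma
  shows integrable_a1_\<mu>1_iff:
      "integrable (lebesgue_on \<Omega>1) (\<lambda>x. a1 x * \<mu>1 x) \<longleftrightarrow> integrable M1 (\<lambda>x. g1 x * m1 x)"
    and integral_a1_\<mu>1: "(\<integral>x. a1 x * \<mu>1 x \<partial>lebesgue_on \<Omega>1) = (\<integral>x. g1 x * m1 x \<partial>M1)"
    and integrable_a2_\<mu>2_iff:
      "integrable (lebesgue_on \<Omega>2) (\<lambda>x. a2 x * \<mu>2 x) \<longleftrightarrow> integrable M2 (\<lambda>x. g2 x * m2 x)"
    and integral_a2_\<mu>2: "(\<integral>x. a2 x * \<mu>2 x \<partial>lebesgue_on \<Omega>2) = (\<integral>x. g2 x * m2 x \<partial>M2)"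
proof -
  have e1: "AE x in lborel. x \<in> \<Omega>1 \<longrightarrow> a1 x * \<mu>1 x = g1 x * m1 x"
    using AE_eq_g1 AE_eq_m1 by eventually_elim auto
  have e2: "AE x in lborel. x \<in> \<Omega>2 \<longrightarrow> a2 x * \<mu>2 x = g2 x * m2 x"
    using AE_eq_g2 AE_eq_m2 by eventually_elim auto
  have a\<mu>_measurable: "(\<lambda>x. a1 x * \<mu>1 x) \<in> borel_measurable (lebesgue_on \<Omega>1)"
    "(\<lambda>x. a2 x * \<mu>2 x) \<in> borel_measurable (lebesgue_on \<Omega>2)"
    using a1_measurable a2_measurable \<mu>1_measurable \<mu>2_measurable by (blast intro: borel_measurable_times)+
  note g1m1 = borel_measurable_times[OF g1_borel m1_borel] and g2m2 = borel_measurable_times[OF g2_borel m2_borel]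
  show "integrable (lebesgue_on \<Omega>1) (\<lambda>x. a1 x * \<mu>1 x) \<longleftrightarrow> integrable M1 (\<lambda>x. g1 x * m1 x)"
    "(\<integral>x. a1 x * \<mu>1 x \<partial>lebesgue_on \<Omega>1) = (\<integral>x. g1 x * m1 x \<partial>M1)"
    using integrable_lebesgue_on_iff_density_AE[OF sets_\<Omega>1 a\<mu>_measurable(1) g1m1 e1]
      integral_lebesgue_on_eq_density_AE[OF sets_\<Omega>1 a\<mu>_measurable(1) g1m1 e1] by blast+
  show "integrable (lebesgue_on \<Omega>2) (\<lambda>x. a2 x * \<mu>2 x) \<longleftrightarrow> integrable M2 (\<lambda>x. g2 x * m2 x)"
    "(\<integral>x. a2 x * \<mu>2 x \<partial>lebesgue_on \<Omega>2) = (\<integral>x. g2 x * m2 x \<partial>M2)"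
    using integrable_lebesgue_on_iff_density_AE[OF sets_\<Omega>2 a\<mu>_measurable(2) g2m2 e2]
      integral_lebesgue_on_eq_density_AE[OF sets_\<Omega>2 a\<mu>_measurable(2) g2m2 e2] by blast+
qed

lemma dual_admissible_reps: "dual_admissible M1 M2 c_ext q m1 m2 g1 g2"
  using minimizer_feasible integrable_excess_reps integrable_a1_\<mu>1_iff integrable_a2_\<mu>2_iff
    integrable_lebesgue_on_iff_density_AE[OF sets_\<Omega>1 a1_measurable g1_borel AE_eq_g1]
    integrable_lebesgue_on_iff_density_AE[OF sets_\<Omega>2 a2_measurable g2_borel AE_eq_g2]
  unfolding feasible_def dual_admissible_def by blast

lemma Lambda_eq_dual_objective_reps:
  "Lambda c \<gamma> q \<mu>1 \<mu>2 \<Omega>1 \<Omega>2 a1 a2 = dual_objective M1 M2 c_ext q (\<gamma> powr (q - 1)) m1 m2 g1 g2"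
  unfolding Lambda_def dual_objective_def integral_excess_reps integral_a1_\<mu>1 integral_a2_\<mu>2 ..

lemma AE_m1_ge_\<delta>: "AE x in M1. \<delta> \<le> m1 x"
  using \<mu>1_ge_\<delta> AE_eq_m1
  unfolding AE_density_indicator_iff_lborel[OF sets_\<Omega>1] AE_lebesgue_on_iff_lborel[OF sets_\<Omega>1]
  by eventually_elim auto

lemma AE_m2_ge_\<delta>: "AE x in M2. \<delta> \<le> m2 x"
  using \<mu>2_ge_\<delta> AE_eq_m2
  unfolding AE_density_indicator_iff_lborel[OF sets_\<Omega>2] AE_lebesgue_on_iff_lborel[OF sets_\<Omega>2]
  by eventually_elim auto

lemma m1_Lp: "integrable M1 (\<lambda>x. \<bar>m1 x\<bar> powr p)"
proof -
  have "AE x in lborel. x \<in> \<Omega>1 \<longrightarrow> \<bar>\<mu>1 x\<bar> powr p = \<bar>m1 x\<bar> powr p"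
    using AE_eq_m1 by eventually_elim auto
  from integrable_lebesgue_on_iff_density_AE[OF sets_\<Omega>1 measurable_abs_powr[OF \<mu>1_measurable]
      measurable_abs_powr[OF m1_borel] this]
  show ?thesis using \<mu>1_Lp unfolding Lp_on_def by blast
qed

lemma m2_Lp: "integrable M2 (\<lambda>x. \<bar>m2 x\<bar> powr p)"
proof -
  have "AE x in lborel. x \<in> \<Omega>2 \<longrightarrow> \<bar>\<mu>2 x\<bar> powr p = \<bar>m2 x\<bar> powr p"
    using AE_eq_m2 by eventually_elim auto
  from integrable_lebesgue_on_iff_density_AE[OF sets_\<Omega>2 measurable_abs_powr[OF \<mu>2_measurable]
      measurable_abs_powr[OF m2_borel] this]
  show ?thesis using \<mu>2_Lp unfolding Lp_on_def by blast
qed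

lemma dual_objective_reps_le:
  assumes adm: "dual_admissible M1 M2 c_ext q m1 m2 b1 b2"
  shows "dual_objective M1 M2 c_ext q (\<gamma> powr (q - 1)) m1 m2 g1 g2
    \<le> dual_objective M1 M2 c_ext q (\<gamma> powr (q - 1)) m1 m2 b1 b2"
proof -
  have "b1 \<in> borel_measurable M1" "b2 \<in> borel_measurable M2"
    using adm unfolding dual_admissible_def by (blast intro: borel_measurable_integrable)+
  then have b: "b1 \<in> borel_measurable borel" "b2 \<in> borel_measurable borel"
    unfolding measurable_density_indicator_lborel .
  have "Lambda c \<gamma> q \<mu>1 \<mu>2 \<Omega>1 \<Omega>2 a1 a2 \<le> Lambda c \<gamma> q \<mu>1 \<mu>2 \<Omega>1 \<Omega>2 b1 b2"
    using minimizer feasible_of_dual_admissible(1)[OF b adm] unfolding is_minimizer_def by blast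
  then show ?thesis
    unfolding Lambda_eq_dual_objective_reps feasible_of_dual_admissible(2)[OF b adm] .
qed

lemma dual_minimizer_reps:
  "\<exists>B. dual_minimizer M1 M2 c_ext m1 m2 g1 g2 p q (\<gamma> powr (q - 1)) \<delta> (- B) B"
proof -
  obtain B where B: "\<And>z. \<bar>c_ext z\<bar> \<le> B" using c_ext_bounded by blast
  have c_ext_measurable: "c_ext \<in> borel_measurable (M1 \<Otimes>\<^sub>M M2)"
    unfolding M1_M2 measurable_density_indicator_lborel by (rule c_ext_borel)
  have c_ext_bounds: "- B \<le> c_ext z \<and> c_ext z \<le> B" if "z \<in> space (M1 \<Otimes>\<^sub>M M2)" for z
    using B[of z] by (auto simp: abs_le_iff)
  have m_measurable: "m1 \<in> borel_measurable M1" "m2 \<in> borel_measurable M2"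
    unfolding measurable_density_indicator_lborel by (rule m1_borel m2_borel)+
  have "0 < measure M1 (space M1)" "0 < measure M2 (space M2)"
    using measure_density_indicator_pos[OF compact1, of \<mu>1] measure_density_indicator_pos[OF compact2, of \<mu>2]
      \<mu>1_mass \<mu>2_mass by simp_all
  moreover have "0 < \<gamma> powr (q - 1)" using \<gamma>_pos by simp
  ultimately have "dual_minimizer M1 M2 c_ext m1 m2 g1 g2 p q (\<gamma> powr (q - 1)) \<delta> (- B) B"
    using finite_measure_density_indicator[OF compact1] finite_measure_density_indicator[OF compact2]
      p_gt_1 conjugate p_ge_2 \<delta>_pos c_ext_measurable c_ext_bounds m_measurable AE_m1_ge_\<delta> AE_m2_ge_\<delta>
      m1_Lp m2_Lp dual_admissible_reps dual_objective_reps_le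
    by (intro dual_minimizer.intro) blast+
  then show ?thesis by blast
qed

lemma minimizer_in_Lq: "a1 \<in> Lp_on q \<Omega>1 \<and> a2 \<in> Lp_on q \<Omega>2"
proof -
  obtain B where "dual_minimizer M1 M2 c_ext m1 m2 g1 g2 p q (\<gamma> powr (q - 1)) \<delta> (- B) B"
    using dual_minimizer_reps by blast
  then interpret reps: dual_minimizer M1 M2 c_ext m1 m2 g1 g2 p q "\<gamma> powr (q - 1)" \<delta> "- B" B .
  show ?thesis
    using Lp_on_of_borel_rep[OF sets_\<Omega>1 a1_measurable] Lp_on_of_borel_rep[OF sets_\<Omega>2 a2_measurable]
      reps.integrable_abs_powr_fst reps.integrable_abs_powr_snd
    unfolding g1_def g2_def by blast
qed

end

theorem mainTheorem8:
  fixes \<Omega>1 \<Omega>2 :: "'a::euclidean_space set"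
    and c :: "'a \<times> 'a \<Rightarrow> real"
    and \<gamma> p q \<delta> c0 :: real
    and \<mu>1 \<mu>2 a1 a2 :: "'a \<Rightarrow> real"
  assumes "compact \<Omega>1" and "compact \<Omega>2"
    and "continuous_on (\<Omega>1 \<times> \<Omega>2) c"
    and "\<forall>z\<in>\<Omega>1 \<times> \<Omega>2. c z \<ge> c0"
    and "\<gamma> > 0"
    and "p > 1" and "1 / p + 1 / q = 1"
    and "p \<ge> 2"
    and "\<delta> > 0"
    and "\<mu>1 \<in> Lp_on p \<Omega>1" and "\<mu>2 \<in> Lp_on p \<Omega>2"
    and "AE x in lebesgue_on \<Omega>1. \<mu>1 x \<ge> \<delta>"
    and "AE x in lebesgue_on \<Omega>2. \<mu>2 x \<ge> \<delta>"
    and "(\<integral>x. \<mu>1 x \<partial>lebesgue_on \<Omega>1) = 1"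
    and "(\<integral>x. \<mu>2 x \<partial>lebesgue_on \<Omega>2) = 1"
    and "is_minimizer c \<gamma> q \<mu>1 \<mu>2 \<Omega>1 \<Omega>2 a1 a2"
  shows "a1 \<in> Lp_on q \<Omega>1 \<and> a2 \<in> Lp_on q \<Omega>2"
proof -
  interpret lebesgue_dual_minimizer \<Omega>1 \<Omega>2 c \<gamma> p q \<delta> \<mu>1 \<mu>2 a1 a2
    by (rule lebesgue_dual_minimizer.intro) (use assms in auto)
  show ?thesis by (rule minimizer_in_Lq)
qed

end
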